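(* Let $k\ge 3$ be an integer, $X$ a finite connected poset and $F$ a field admitting a primitive $(k-1)$-th root of unity with $\mathrm{char}(F)\nmid k$. Then every bijective $F$-linear map $\varphi:I(X,F)\to I(X,F)$ with $\varphi(P_k(I(X,F)))\subseteq P_k(I(X,F))$ is of the form $\varphi=r\psi$, where $r\in F$ satisfies $r^{k-1}=1$ and $\psi$ is either an automorphism or an anti-automorphism of $I(X,F)$.
   Context: $I(X,F)$ is the incidence algebra of the locally finite poset $X$ over $F$ (functions $f:X\times X\to F$ vanishing unless $x\le y$, with product $(fg)(x,y)=\sum_{x\le z\le y}f(x,z)g(z,y)$). A poset is connected if any two elements are joined by a finite sequence of elements in which consecutive elements are comparable. $P_k(A)=\{a: a^k=a\}$ is the set of $k$-potents. *)

theory Defs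
  imports Main
begin

definition poset_on :: "'a set \<Rightarrow> ('a \<Rightarrow> 'a \<Rightarrow> bool) \<Rightarrow> bool" where
  "poset_on X le \<longleftrightarrow>
     (\<forall>x\<in>X. le x x) \<and>
     (\<forall>x\<in>X. \<forall>y\<in>X. le x y \<and> le y x \<longrightarrow> x = y) \<and>
     (\<forall>x\<in>X. \<forall>y\<in>X. \<forall>z\<in>X. le x y \<and> le y z \<longrightarrow> le x z)"

definition comparable_step :: "'a set \<Rightarrow> ('a \<Rightarrow> 'a \<Rightarrow> bool) \<Rightarrow> 'a \<Rightarrow> 'a \<Rightarrow> bool" where
  "comparable_step X le u v \<longleftrightarrow> u \<in> X \<and> v \<in> X \<and> (le u v \<or> le v u)"

definition connected_poset :: "'a set \<Rightarrow> ('a \<Rightarrow> 'a \<Rightarrow> bool) \<Rightarrow> bool" where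
  "connected_poset X le \<longleftrightarrow> (\<forall>x\<in>X. \<forall>y\<in>X. (comparable_step X le)\<^sup>*\<^sup>* x y)"

definition incidence_alg :: "'a set \<Rightarrow> ('a \<Rightarrow> 'a \<Rightarrow> bool) \<Rightarrow> ('a \<Rightarrow> 'a \<Rightarrow> 'f::field) set" where
  "incidence_alg X le = {f. \<forall>x y. f x y \<noteq> 0 \<longrightarrow> x \<in> X \<and> y \<in> X \<and> le x y}"

definition inc_mult :: "'a set \<Rightarrow> ('a \<Rightarrow> 'a \<Rightarrow> bool) \<Rightarrow> ('a \<Rightarrow> 'a \<Rightarrow> 'f::field)
    \<Rightarrow> ('a \<Rightarrow> 'a \<Rightarrow> 'f) \<Rightarrow> ('a \<Rightarrow> 'a \<Rightarrow> 'f)" where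
  "inc_mult X le f g = (\<lambda>x y. if x \<in> X \<and> y \<in> X \<and> le x y
      then (\<Sum>z\<in>{z\<in>X. le x z \<and> le z y}. f x z * g z y) else 0)"

definition inc_one :: "'a set \<Rightarrow> ('a \<Rightarrow> 'a \<Rightarrow> 'f::field)" where
  "inc_one X = (\<lambda>x y. if x \<in> X \<and> x = y then 1 else 0)"

fun inc_pow :: "'a set \<Rightarrow> ('a \<Rightarrow> 'a \<Rightarrow> bool) \<Rightarrow> ('a \<Rightarrow> 'a \<Rightarrow> 'f::field) \<Rightarrow> nat
    \<Rightarrow> ('a \<Rightarrow> 'a \<Rightarrow> 'f)" where
  "inc_pow X le f 0 = inc_one X"
| "inc_pow X le f (Suc n) = inc_mult X le f (inc_pow X le f n)"

definition k_potents :: "nat \<Rightarrow> 'a set \<Rightarrow> ('a \<Rightarrow> 'a \<Rightarrow> bool) \<Rightarrow> ('a \<Rightarrow> 'a \<Rightarrow> 'f::field) set" where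
  "k_potents k X le = {a \<in> incidence_alg X le. inc_pow X le a k = a}"

definition inc_smult :: "'f::field \<Rightarrow> ('a \<Rightarrow> 'a \<Rightarrow> 'f) \<Rightarrow> ('a \<Rightarrow> 'a \<Rightarrow> 'f)" where
  "inc_smult c f = (\<lambda>x y. c * f x y)"

definition inc_add :: "('a \<Rightarrow> 'a \<Rightarrow> 'f::field) \<Rightarrow> ('a \<Rightarrow> 'a \<Rightarrow> 'f) \<Rightarrow> ('a \<Rightarrow> 'a \<Rightarrow> 'f)" where
  "inc_add f g = (\<lambda>x y. f x y + g x y)"

definition inc_linear :: "'a set \<Rightarrow> ('a \<Rightarrow> 'a \<Rightarrow> bool)
    \<Rightarrow> (('a \<Rightarrow> 'a \<Rightarrow> 'f::field) \<Rightarrow> ('a \<Rightarrow> 'a \<Rightarrow> 'f)) \<Rightarrow> bool" where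
  "inc_linear X le \<phi> \<longleftrightarrow>
     (\<forall>f\<in>incidence_alg X le. \<forall>g\<in>incidence_alg X le. \<phi> (inc_add f g) = inc_add (\<phi> f) (\<phi> g)) \<and>
     (\<forall>c. \<forall>f\<in>incidence_alg X le. \<phi> (inc_smult c f) = inc_smult c (\<phi> f))"

definition inc_automorphism :: "'a set \<Rightarrow> ('a \<Rightarrow> 'a \<Rightarrow> bool)
    \<Rightarrow> (('a \<Rightarrow> 'a \<Rightarrow> 'f::field) \<Rightarrow> ('a \<Rightarrow> 'a \<Rightarrow> 'f)) \<Rightarrow> bool" where
  "inc_automorphism X le \<psi> \<longleftrightarrow>
     bij_betw \<psi> (incidence_alg X le) (incidence_alg X le) \<and> inc_linear X le \<psi> \<and>
     \<psi> (inc_one X) = inc_one X \<and>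
     (\<forall>f\<in>incidence_alg X le. \<forall>g\<in>incidence_alg X le.
        \<psi> (inc_mult X le f g) = inc_mult X le (\<psi> f) (\<psi> g))"

definition inc_anti_automorphism :: "'a set \<Rightarrow> ('a \<Rightarrow> 'a \<Rightarrow> bool)
    \<Rightarrow> (('a \<Rightarrow> 'a \<Rightarrow> 'f::field) \<Rightarrow> ('a \<Rightarrow> 'a \<Rightarrow> 'f)) \<Rightarrow> bool" where
  "inc_anti_automorphism X le \<psi> \<longleftrightarrow>
     bij_betw \<psi> (incidence_alg X le) (incidence_alg X le) \<and> inc_linear X le \<psi> \<and>
     \<psi> (inc_one X) = inc_one X \<and>
     (\<forall>f\<in>incidence_alg X le. \<forall>g\<in>incidence_alg X le.
        \<psi> (inc_mult X le f g) = inc_mult X le (\<psi> g) (\<psi> f))"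

definition primitive_root_of_unity :: "nat \<Rightarrow> 'f::field \<Rightarrow> bool" where
  "primitive_root_of_unity n w \<longleftrightarrow> w ^ n = 1 \<and> (\<forall>j. 0 < j \<and> j < n \<longrightarrow> w ^ j \<noteq> 1)"

end

theory Submission
  imports Defs "HOL-Library.Function_Algebras" "HOL-Computational_Algebra.Polynomial"
begin

text \<open>
  Write \<open>k = m + 1\<close> and let \<open>w\<close> be a primitive \<open>m\<close>-th root of unity. For an idempotent \<open>e\<close>, all
  \<open>e + w^j (1 - e)\<close> are \<open>k\<close>-potents, so \<open>\<phi> e + t \<phi>(1 - e)\<close> is a \<open>k\<close>-potent for the \<open>m\<close> values
  \<open>t = w^j\<close>; a Vandermonde argument on the coefficients of \<open>(a + t b)^k\<close> then forces
  \<open>\<phi> e \<phi>(1 - e) = 0\<close>. Hence \<open>\<phi> 1\<close> commutes with every \<open>\<phi> e\<close>, thus with the whole algebra, and as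
  \<open>X\<close> is connected \<open>\<phi> 1 = r 1\<close> with \<open>r^m = 1\<close>; the map \<open>\<psi> = r\<^sup>-\<^sup>1 \<phi>\<close> preserves idempotents.

  A bijective linear map \<open>\<psi>\<close> preserving \<open>1\<close> and idempotents sends the diagonal units \<open>e\<^sub>x\<^sub>x\<close> to a
  complete family of orthogonal idempotents, which a unit conjugates to the diagonal units
  \<open>e\<^sub>\<sigma>\<^sub>x\<^sub>\<sigma>\<^sub>x\<close> for a permutation \<open>\<sigma>\<close>. Testing the conjugated map on the idempotents
  \<open>e\<^sub>x\<^sub>x \<plusminus> e\<^sub>x\<^sub>y\<close> shows that it sends \<open>e\<^sub>x\<^sub>y\<close> to a multiple of \<open>e\<^sub>\<sigma>\<^sub>x\<^sub>\<sigma>\<^sub>y\<close> or of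
  \<open>e\<^sub>\<sigma>\<^sub>y\<^sub>\<sigma>\<^sub>x\<close>. Idempotents built from three matrix units force adjacent comparable pairs to be
  mapped with the same orientation, so by connectedness the orientation is global, and \<open>\<psi>\<close> is
  multiplicative or anti-multiplicative.
\<close>

section \<open>Incidence algebras of finite posets\<close>

definition inc_unit :: "'a \<Rightarrow> 'a \<Rightarrow> 'a \<Rightarrow> 'a \<Rightarrow> 'f::field" where
  "inc_unit i j = (\<lambda>x y. if x = i \<and> y = j then 1 else 0)"

lemma inc_unit_apply: "inc_unit i j x y = (if x = i \<and> y = j then 1 else 0)"
  by (simp add: inc_unit_def)

lemma inc_unit_neq_zero: "inc_unit i j \<noteq> 0"
  by (auto simp: fun_eq_iff inc_unit_def dest: spec[of _ i])

lemma inc_smult_apply: "inc_smult c f x y = c * f x y"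
  by (simp add: inc_smult_def)

lemma inc_add_eq_plus: "inc_add f g = f + g"
  by (simp add: inc_add_def fun_eq_iff)

lemma sum_fun_apply: "(sum F S) x = (\<Sum>i\<in>S. F i x)"
  by (induct S rule: infinite_finite_induct) auto

lemma inc_smult_smult: "inc_smult c (inc_smult d f) = inc_smult (c * d) f"
  by (simp add: fun_eq_iff inc_smult_apply mult.assoc)

lemma inc_smult_add: "inc_smult c (f + g) = inc_smult c f + inc_smult c g"
  by (simp add: inc_smult_apply fun_eq_iff distrib_left)

lemma inc_smult_one [simp]: "inc_smult 1 f = f"
  by (simp add: inc_smult_apply fun_eq_iff)

lemma inc_smult_zero [simp]: "inc_smult 0 f = 0" "inc_smult c 0 = 0"
  by (simp_all add: inc_smult_apply fun_eq_iff)

lemma inc_smult_sum: "inc_smult c (sum F S) = (\<Sum>i\<in>S. inc_smult c (F i))"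
proof (induct S rule: infinite_finite_induct)
  case (insert x S)
  then show ?case by (simp only: sum.insert[OF insert(1,2)] inc_smult_add insert(3))
qed (simp_all add: fun_eq_iff inc_smult_apply)

locale finite_poset =
  fixes X :: "'a set" and le :: "'a \<Rightarrow> 'a \<Rightarrow> bool"
  assumes finite_X: "finite X" and poset: "poset_on X le"
begin

abbreviation inc_times :: "('a \<Rightarrow> 'a \<Rightarrow> 'f::field) \<Rightarrow> ('a \<Rightarrow> 'a \<Rightarrow> 'f) \<Rightarrow> ('a \<Rightarrow> 'a \<Rightarrow> 'f)"
    (infixl "\<star>" 70) where "f \<star> g \<equiv> inc_mult X le f g"

abbreviation \<I> :: "('a \<Rightarrow> 'a \<Rightarrow> 'f::field) set" where "\<I> \<equiv> incidence_alg X le"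

text \<open>\<open>\<one>\<close> is the identity of \<open>I(X,F)\<close>, not the constant function \<open>1\<close> of \<open>Function_Algebras\<close>.\<close>

abbreviation inc_id :: "'a \<Rightarrow> 'a \<Rightarrow> 'f::field" ("\<one>") where "\<one> \<equiv> inc_one X"

lemma le_refl_on: "x \<in> X \<Longrightarrow> le x x"
  using poset unfolding poset_on_def by blast

lemma le_antisym_on: "x \<in> X \<Longrightarrow> y \<in> X \<Longrightarrow> le x y \<Longrightarrow> le y x \<Longrightarrow> x = y"
  using poset unfolding poset_on_def by blast

lemma le_trans_on: "x \<in> X \<Longrightarrow> y \<in> X \<Longrightarrow> z \<in> X \<Longrightarrow> le x y \<Longrightarrow> le y z \<Longrightarrow> le x z"
  using poset unfolding poset_on_def by blast

lemma inc_mult_apply: "(f \<star> g) x y = (if x \<in> X \<and> y \<in> X \<and> le x y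
    then (\<Sum>z\<in>{z\<in>X. le x z \<and> le z y}. f x z * g z y) else 0)"
  by (simp add: inc_mult_def)

lemma incidence_alg_vanishes:
  "f \<in> \<I> \<Longrightarrow> \<not> (x \<in> X \<and> y \<in> X \<and> le x y) \<Longrightarrow> f x y = 0"
  by (auto simp: incidence_alg_def)

lemma incidence_alg_iff: "f \<in> \<I> \<longleftrightarrow> (\<forall>x y. \<not> (x \<in> X \<and> y \<in> X \<and> le x y) \<longrightarrow> f x y = 0)"
  by (auto simp: incidence_alg_def)

lemma inc_mult_in [simp]: "f \<star> g \<in> \<I>"
  by (auto simp: incidence_alg_def inc_mult_apply split: if_splits)

lemma zero_in [simp]: "0 \<in> \<I>"
  by (simp add: incidence_alg_def)

lemma add_in [simp]: "f \<in> \<I> \<Longrightarrow> g \<in> \<I> \<Longrightarrow> f + g \<in> \<I>"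
  by (simp add: incidence_alg_iff)

lemma diff_in [simp]: "f \<in> \<I> \<Longrightarrow> g \<in> \<I> \<Longrightarrow> f - g \<in> \<I>"
  by (simp add: incidence_alg_iff)

lemma inc_smult_in [simp]: "f \<in> \<I> \<Longrightarrow> inc_smult c f \<in> \<I>"
  by (simp add: inc_smult_apply incidence_alg_iff)

lemma sum_in: "(\<And>i. i \<in> S \<Longrightarrow> F i \<in> \<I>) \<Longrightarrow> sum F S \<in> \<I>"
  by (induct S rule: infinite_finite_induct) auto

lemma inc_one_in [simp]: "\<one> \<in> \<I>"
  by (auto simp: incidence_alg_def inc_one_def le_refl_on)

lemma inc_unit_in [simp]: "i \<in> X \<Longrightarrow> j \<in> X \<Longrightarrow> le i j \<Longrightarrow> inc_unit i j \<in> \<I>"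
  by (auto simp: incidence_alg_def inc_unit_def)

lemma inc_mult_assoc: "(f \<star> g) \<star> h = f \<star> (g \<star> h)"
proof (intro ext)
  fix x y
  show "((f \<star> g) \<star> h) x y = (f \<star> (g \<star> h)) x y"
  proof (cases "x \<in> X \<and> y \<in> X \<and> le x y")
    case False thus ?thesis unfolding inc_mult_apply[of _ _ x y] by auto
  next
    case True
    define I where "I = {z\<in>X. le x z \<and> le z y}"
    have fin: "finite I" using finite_X by (simp add: I_def)
    have "((f \<star> g) \<star> h) x y = (\<Sum>z\<in>I. (f \<star> g) x z * h z y)"
      using True by (simp add: inc_mult_apply[of _ _ x y] I_def)
    also have "\<dots> = (\<Sum>z\<in>I. (\<Sum>w\<in>{w\<in>X. le x w \<and> le w z}. f x w * g w z) * h z y)"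
      using True by (intro sum.cong) (auto simp: inc_mult_apply I_def)
    also have "\<dots> = (\<Sum>z\<in>I. \<Sum>w\<in>{w. w \<in> I \<and> le w z}. f x w * g w z * h z y)"
    proof (rule sum.cong[OF refl])
      fix z assume z: "z \<in> I"
      have "{w\<in>X. le x w \<and> le w z} = {w. w \<in> I \<and> le w z}"
        using z True by (auto simp: I_def intro: le_trans_on)
      thus "(\<Sum>w\<in>{w\<in>X. le x w \<and> le w z}. f x w * g w z) * h z y =
          (\<Sum>w\<in>{w. w \<in> I \<and> le w z}. f x w * g w z * h z y)"
        by (simp add: sum_distrib_right)
    qed
    also have "\<dots> = (\<Sum>w\<in>I. \<Sum>z\<in>{z. z \<in> I \<and> le w z}. f x w * g w z * h z y)"
      using sum.swap_restrict[OF fin fin, of "\<lambda>z w. f x w * g w z * h z y" "\<lambda>z w. le w z"]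
      by simp
    also have "\<dots> = (\<Sum>w\<in>I. f x w * (\<Sum>z\<in>{z\<in>X. le w z \<and> le z y}. g w z * h z y))"
    proof (rule sum.cong[OF refl])
      fix w assume w: "w \<in> I"
      have "{z\<in>X. le w z \<and> le z y} = {z. z \<in> I \<and> le w z}"
        using w True by (auto simp: I_def intro: le_trans_on)
      thus "(\<Sum>z\<in>{z. z \<in> I \<and> le w z}. f x w * g w z * h z y) =
          f x w * (\<Sum>z\<in>{z\<in>X. le w z \<and> le z y}. g w z * h z y)"
        by (simp add: sum_distrib_left mult.assoc)
    qed
    also have "\<dots> = (\<Sum>w\<in>I. f x w * (g \<star> h) w y)"
      using True by (intro sum.cong) (auto simp: inc_mult_apply I_def)
    also have "\<dots> = (f \<star> (g \<star> h)) x y"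
      using True by (simp add: inc_mult_apply[of _ _ x y] I_def)
    finally show ?thesis .
  qed
qed

lemma inc_distrib_left: "f \<star> (g + h) = f \<star> g + f \<star> h"
  by (auto simp: fun_eq_iff inc_mult_apply sum.distrib distrib_left)

lemma inc_distrib_right: "(g + h) \<star> f = g \<star> f + h \<star> f"
  by (auto simp: fun_eq_iff inc_mult_apply sum.distrib distrib_right)

lemma inc_right_diff_distrib: "f \<star> (g - h) = f \<star> g - f \<star> h"
  by (auto simp: fun_eq_iff inc_mult_apply sum_subtractf right_diff_distrib)

lemma inc_left_diff_distrib: "(g - h) \<star> f = g \<star> f - h \<star> f"
  by (auto simp: fun_eq_iff inc_mult_apply sum_subtractf left_diff_distrib)

lemma inc_smult_mult_left: "inc_smult c f \<star> g = inc_smult c (f \<star> g)"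
  by (auto simp: inc_smult_apply fun_eq_iff inc_mult_apply sum_distrib_left mult.assoc)

lemma inc_smult_mult_right: "f \<star> inc_smult c g = inc_smult c (f \<star> g)"
  by (auto simp: inc_smult_apply fun_eq_iff inc_mult_apply sum_distrib_left mult.left_commute)

lemma inc_mult_zero [simp]: "0 \<star> f = 0" "f \<star> 0 = 0"
  by (auto simp: fun_eq_iff inc_mult_apply)

lemma inc_sum_mult: "sum F S \<star> g = (\<Sum>i\<in>S. F i \<star> g)"
proof (induct S rule: infinite_finite_induct)
  case (insert x S)
  then show ?case by (simp only: sum.insert[OF insert(1,2)] inc_distrib_right insert(3))
qed (auto simp: fun_eq_iff inc_mult_apply)

lemma inc_mult_sum: "g \<star> sum F S = (\<Sum>i\<in>S. g \<star> F i)"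
proof (induct S rule: infinite_finite_induct)
  case (insert x S)
  then show ?case by (simp only: sum.insert[OF insert(1,2)] inc_distrib_left insert(3))
qed (auto simp: fun_eq_iff inc_mult_apply)

lemma inc_mult_diag: "i \<in> X \<Longrightarrow> (f \<star> g) i i = f i i * g i i"
proof -
  assume i: "i \<in> X"
  then have "{z\<in>X. le i z \<and> le z i} = {i}" using le_antisym_on le_refl_on by auto
  then show ?thesis using i le_refl_on by (simp add: inc_mult_apply)
qed

lemma inc_unit_mult_apply: assumes "i \<in> X" "j \<in> X" "le i j" "f \<in> \<I>"
  shows "(inc_unit i j \<star> f) x y = (if x = i then f j y else 0)"
proof (cases "x = i")
  case True
  show ?thesis
  proof (cases "y \<in> X \<and> le i y")
    case yes: True
    have "(inc_unit i j \<star> f) x y = (\<Sum>z\<in>{z\<in>X. le i z \<and> le z y}. if z = j then f j y else 0)"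
      using True yes assms by (auto simp: inc_mult_apply inc_unit_def intro!: sum.cong)
    also have "\<dots> = (if j \<in> {z\<in>X. le i z \<and> le z y} then f j y else 0)"
      by (simp add: sum.delta[OF finite_subset[OF _ finite_X]])
    also have "\<dots> = f j y" using assms incidence_alg_vanishes[OF assms(4), of j y] by auto
    finally show ?thesis using True by simp
  next
    case False
    have "f j y = 0"
    proof (rule ccontr)
      assume "f j y \<noteq> 0"
      then have "y \<in> X" "le j y" using assms(4) by (auto simp: incidence_alg_def)
      then show False using False assms le_trans_on by blast
    qed
    then show ?thesis using True False by (auto simp: inc_mult_apply)
  qed
next
  case False
  then show ?thesis by (auto simp: inc_mult_apply inc_unit_def)
qed

lemma inc_mult_unit_apply: assumes "i \<in> X" "j \<in> X" "le i j" "f \<in> \<I>"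
  shows "(f \<star> inc_unit i j) x y = (if y = j then f x i else 0)"
proof (cases "y = j")
  case True
  show ?thesis
  proof (cases "x \<in> X \<and> le x j")
    case yes: True
    have "(f \<star> inc_unit i j) x y = (\<Sum>z\<in>{z\<in>X. le x z \<and> le z j}. if z = i then f x i else 0)"
      using True yes assms by (auto simp: inc_mult_apply inc_unit_def intro!: sum.cong)
    also have "\<dots> = (if i \<in> {z\<in>X. le x z \<and> le z j} then f x i else 0)"
      by (simp add: sum.delta[OF finite_subset[OF _ finite_X]])
    also have "\<dots> = f x i" using assms incidence_alg_vanishes[OF assms(4), of x i] by auto
    finally show ?thesis using True by simp
  next
    case False
    have "f x i = 0"
    proof (rule ccontr)
      assume "f x i \<noteq> 0"
      then have "x \<in> X" "le x i" using assms(4) by (auto simp: incidence_alg_def)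
      then show False using False assms le_trans_on by blast
    qed
    then show ?thesis using True False by (auto simp: inc_mult_apply)
  qed
next
  case False
  then show ?thesis by (auto simp: inc_mult_apply inc_unit_def)
qed

lemma inc_unit_mult_unit:
  assumes "i \<in> X" "j \<in> X" "le i j" "k \<in> X" "l \<in> X" "le k l"
  shows "inc_unit i j \<star> inc_unit k l = (if j = k then inc_unit i l else 0)"
  using assms by (auto simp: fun_eq_iff inc_unit_mult_apply inc_unit_apply)

lemma inc_unit_idempotent: "i \<in> X \<Longrightarrow> inc_unit i i \<star> inc_unit i i = inc_unit i i"
  by (simp add: inc_unit_mult_unit le_refl_on)

lemma inc_unit_sandwich:
  assumes "i \<in> X" "f \<in> \<I>"
  shows "inc_unit i i \<star> (f \<star> inc_unit i i) = inc_smult (f i i) (inc_unit i i)"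
  using assms le_refl_on by (auto simp: inc_smult_apply fun_eq_iff inc_unit_mult_apply inc_mult_unit_apply inc_unit_apply)

lemma inc_one_eq_sum_units: "\<one> = (\<Sum>i\<in>X. inc_unit i i)"
proof (intro ext)
  fix x y
  have "(\<Sum>i\<in>X. inc_unit i i) x y = (\<Sum>i\<in>X. if x = i then (if y = x then 1 else 0) else 0)"
    unfolding sum_fun_apply inc_unit_apply by (intro sum.cong) auto
  also have "\<dots> = \<one> x y" by (auto simp add: sum.delta'[OF finite_X] inc_one_def)
  finally show "\<one> x y = (\<Sum>i\<in>X. inc_unit i i) x y" by (rule sym)
qed

lemma inc_one_mult: "f \<in> \<I> \<Longrightarrow> \<one> \<star> f = f"
  by (simp add: inc_one_eq_sum_units inc_sum_mult fun_eq_iff sum_fun_apply inc_unit_mult_apply le_refl_on sum.delta[OF finite_X] sum.delta'[OF finite_X])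
     (auto simp: incidence_alg_vanishes)

lemma inc_mult_one: "f \<in> \<I> \<Longrightarrow> f \<star> \<one> = f"
  by (simp add: inc_one_eq_sum_units inc_mult_sum fun_eq_iff sum_fun_apply inc_mult_unit_apply le_refl_on sum.delta[OF finite_X] sum.delta'[OF finite_X])
     (auto simp: incidence_alg_vanishes)

definition le_pairs :: "('a \<times> 'a) set" where
  "le_pairs = {(x, y). x \<in> X \<and> y \<in> X \<and> le x y}"

lemma finite_le_pairs: "finite le_pairs"
  by (rule finite_subset[of _ "X \<times> X"]) (auto simp: le_pairs_def finite_X)

lemma inc_unit_pair_in: "p \<in> le_pairs \<Longrightarrow> inc_unit (fst p) (snd p) \<in> \<I>"
  by (auto simp: le_pairs_def)

lemma incidence_expansion: assumes "f \<in> \<I>"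
  shows "f = (\<Sum>p\<in>le_pairs. inc_smult (f (fst p) (snd p)) (inc_unit (fst p) (snd p)))"
proof (intro ext)
  fix x y
  have "(\<Sum>p\<in>le_pairs. inc_smult (f (fst p) (snd p)) (inc_unit (fst p) (snd p))) x y
      = (\<Sum>p\<in>le_pairs. if p = (x,y) then f x y else 0)"
    by (simp add: inc_smult_apply sum_fun_apply inc_unit_apply) (intro sum.cong, auto)
  also have "\<dots> = f x y"
    using incidence_alg_vanishes[OF assms, of x y] by (simp add: inc_smult_apply sum.delta[OF finite_le_pairs]) (auto simp: le_pairs_def)
  finally show "f x y = (\<Sum>p\<in>le_pairs. inc_smult (f (fst p) (snd p)) (inc_unit (fst p) (snd p))) x y" by simp
qed

abbreviation ipow :: "('a \<Rightarrow> 'a \<Rightarrow> 'f::field) \<Rightarrow> nat \<Rightarrow> ('a \<Rightarrow> 'a \<Rightarrow> 'f)" where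
  "ipow f n \<equiv> inc_pow X le f n"

lemma ipow_in [simp]: "ipow f n \<in> \<I>"
  by (cases n) auto

lemma ipow_Suc_right: "f \<in> \<I> \<Longrightarrow> ipow f (Suc n) = ipow f n \<star> f"
proof (induct n)
  case 0
  then show ?case by (simp add: inc_one_mult inc_mult_one)
next
  case (Suc n)
  then have "ipow f (Suc (Suc n)) = f \<star> (ipow f n \<star> f)" by simp
  then show ?case by (simp add: inc_mult_assoc)
qed

lemma idempotent_ipow: "f \<in> \<I> \<Longrightarrow> f \<star> f = f \<Longrightarrow> ipow f (Suc n) = f"
  by (induct n) (auto simp: inc_mult_one)

lemma ipow_smult: "ipow (inc_smult r f) n = inc_smult (r ^ n) (ipow f n)"
  by (induct n) (auto simp: inc_smult_mult_left inc_smult_mult_right inc_smult_smult mult.commute)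

lemma ipow_one: "ipow \<one> n = \<one>"
  by (induct n) (auto simp: inc_one_mult)

lemma commute_ipow:
  assumes "a \<in> \<I>" "b \<in> \<I>" "a \<star> b = b \<star> a"
  shows "b \<star> ipow a n = ipow a n \<star> b"
proof (induct n)
  case 0
  then show ?case using assms by (simp add: inc_one_mult inc_mult_one)
next
  case (Suc n)
  have "b \<star> ipow a (Suc n) = (b \<star> a) \<star> ipow a n" by (simp add: inc_mult_assoc)
  also have "\<dots> = a \<star> (b \<star> ipow a n)" by (simp only: assms(3)[symmetric] inc_mult_assoc)
  also have "\<dots> = ipow a (Suc n) \<star> b" by (simp only: Suc inc_mult_assoc inc_pow.simps)
  finally show ?case .
qed

lemma inc_linear_add: "inc_linear X le T \<Longrightarrow> f \<in> \<I> \<Longrightarrow> g \<in> \<I> \<Longrightarrow> T (f + g) = T f + T g"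
  by (simp add: inc_linear_def inc_add_eq_plus)

lemma inc_linear_smult: "inc_linear X le T \<Longrightarrow> f \<in> \<I> \<Longrightarrow> T (inc_smult c f) = inc_smult c (T f)"
  by (simp add: inc_linear_def)

lemma inc_linear_zero: "inc_linear X le T \<Longrightarrow> T 0 = 0"
  using inc_linear_smult[of T 0 0] by simp

lemma inc_linear_diff:
  assumes T: "inc_linear X le T" and "f \<in> \<I>" "g \<in> \<I>"
  shows "T (f - g) = T f - T g"
proof -
  have "f - g = f + inc_smult (-1) g" by (simp add: fun_eq_iff inc_smult_apply)
  then have "T (f - g) = T f + T (inc_smult (-1) g)"
    using assms by (simp only: inc_linear_add[OF T] inc_smult_in)
  then show ?thesis using assms by (simp add: inc_linear_smult[OF T] fun_eq_iff inc_smult_apply)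
qed

lemma inc_linear_sum:
  assumes T: "inc_linear X le T" and "finite S" "\<And>i. i \<in> S \<Longrightarrow> F i \<in> \<I>"
  shows "T (sum F S) = (\<Sum>i\<in>S. T (F i))"
  using assms(2,3)
proof (induct S rule: finite_induct)
  case empty
  show ?case by (metis inc_linear_zero[OF T] sum.empty)
next
  case (insert x S)
  have "T (sum F (insert x S)) = T (F x + sum F S)" by (simp only: sum.insert[OF insert(1,2)])
  also have "\<dots> = T (F x) + T (sum F S)" using insert by (intro inc_linear_add[OF T]) (auto intro: sum_in)
  also have "\<dots> = (\<Sum>i\<in>insert x S. T (F i))" using insert by (simp only: sum.insert[OF insert(1,2)]) auto
  finally show ?case .
qed

lemma inc_linear_expansion:
  assumes T: "inc_linear X le T" and f: "f \<in> \<I>"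
  shows "T f = (\<Sum>p\<in>le_pairs. inc_smult (f (fst p) (snd p)) (T (inc_unit (fst p) (snd p))))"
proof -
  have "T f = T (\<Sum>p\<in>le_pairs. inc_smult (f (fst p) (snd p)) (inc_unit (fst p) (snd p)))"
    using incidence_expansion[OF f] by simp
  also have "\<dots> = (\<Sum>p\<in>le_pairs. T (inc_smult (f (fst p) (snd p)) (inc_unit (fst p) (snd p))))"
    by (rule inc_linear_sum[OF T finite_le_pairs]) (simp add: inc_unit_pair_in)
  also have "\<dots> = (\<Sum>p\<in>le_pairs. inc_smult (f (fst p) (snd p)) (T (inc_unit (fst p) (snd p))))"
    by (intro sum.cong refl) (simp add: inc_linear_smult[OF T] inc_unit_pair_in)
  finally show ?thesis .
qed

lemma bilinear_sum_mult:
  "(\<Sum>p\<in>S. inc_smult (a p) (M p)) \<star> (\<Sum>q\<in>S'. inc_smult (b q) (N q))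
     = (\<Sum>p\<in>S. \<Sum>q\<in>S'. inc_smult (a p * b q) (M p \<star> N q))"
  by (subst inc_sum_mult, subst inc_mult_sum)
    (simp add: inc_smult_mult_left inc_smult_mult_right inc_smult_smult mult.commute)

lemma inc_linear_mult_expansion:
  assumes T: "inc_linear X le T" and f: "f \<in> \<I>" and g: "g \<in> \<I>"
  shows "T (f \<star> g) = (\<Sum>p\<in>le_pairs. \<Sum>q\<in>le_pairs. inc_smult (f (fst p) (snd p) * g (fst q) (snd q))
      (T (inc_unit (fst p) (snd p) \<star> inc_unit (fst q) (snd q))))"
proof -
  have "f \<star> g = (\<Sum>p\<in>le_pairs. inc_smult (f (fst p) (snd p)) (inc_unit (fst p) (snd p))) \<star>
      (\<Sum>q\<in>le_pairs. inc_smult (g (fst q) (snd q)) (inc_unit (fst q) (snd q)))"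
    using incidence_expansion[OF f] incidence_expansion[OF g] by (rule arg_cong2)
  also have "\<dots> = (\<Sum>p\<in>le_pairs. \<Sum>q\<in>le_pairs. inc_smult (f (fst p) (snd p) * g (fst q) (snd q))
      (inc_unit (fst p) (snd p) \<star> inc_unit (fst q) (snd q)))"
    by (rule bilinear_sum_mult)
  finally have "T (f \<star> g) = (\<Sum>p\<in>le_pairs. T (\<Sum>q\<in>le_pairs. inc_smult (f (fst p) (snd p) * g (fst q) (snd q))
      (inc_unit (fst p) (snd p) \<star> inc_unit (fst q) (snd q))))"
    by (simp only: inc_linear_sum[OF T finite_le_pairs] sum_in inc_smult_in inc_mult_in)
  also have "\<dots> = (\<Sum>p\<in>le_pairs. \<Sum>q\<in>le_pairs. inc_smult (f (fst p) (snd p) * g (fst q) (snd q))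
      (T (inc_unit (fst p) (snd p) \<star> inc_unit (fst q) (snd q))))"
    by (intro sum.cong refl)
      (simp only: inc_linear_sum[OF T finite_le_pairs] inc_linear_smult[OF T] inc_smult_in inc_mult_in)
  finally show ?thesis .
qed

lemma inc_linear_mult_from_units:
  assumes T: "inc_linear X le T"
    and units: "\<And>p q. p \<in> le_pairs \<Longrightarrow> q \<in> le_pairs \<Longrightarrow>
      T (inc_unit (fst p) (snd p) \<star> inc_unit (fst q) (snd q)) =
      T (inc_unit (fst p) (snd p)) \<star> T (inc_unit (fst q) (snd q))"
    and f: "f \<in> \<I>" and g: "g \<in> \<I>"
  shows "T (f \<star> g) = T f \<star> T g"
proof -
  have "T (f \<star> g) = (\<Sum>p\<in>le_pairs. \<Sum>q\<in>le_pairs. inc_smult (f (fst p) (snd p) * g (fst q) (snd q))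
      (T (inc_unit (fst p) (snd p)) \<star> T (inc_unit (fst q) (snd q))))"
    unfolding inc_linear_mult_expansion[OF T f g] by (intro sum.cong refl) (simp add: units)
  also have "\<dots> = T f \<star> T g"
    unfolding inc_linear_expansion[OF T f] inc_linear_expansion[OF T g] by (simp only: bilinear_sum_mult)
  finally show ?thesis .
qed

lemma inc_linear_antimult_from_units:
  assumes T: "inc_linear X le T"
    and units: "\<And>p q. p \<in> le_pairs \<Longrightarrow> q \<in> le_pairs \<Longrightarrow>
      T (inc_unit (fst p) (snd p) \<star> inc_unit (fst q) (snd q)) =
      T (inc_unit (fst q) (snd q)) \<star> T (inc_unit (fst p) (snd p))"
    and f: "f \<in> \<I>" and g: "g \<in> \<I>"
  shows "T (f \<star> g) = T g \<star> T f"
proof -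
  have "T (f \<star> g) = (\<Sum>p\<in>le_pairs. \<Sum>q\<in>le_pairs. inc_smult (g (fst q) (snd q) * f (fst p) (snd p))
      (T (inc_unit (fst q) (snd q)) \<star> T (inc_unit (fst p) (snd p))))"
    unfolding inc_linear_mult_expansion[OF T f g] by (intro sum.cong refl) (simp add: units mult.commute)
  also have "\<dots> = (\<Sum>q\<in>le_pairs. \<Sum>p\<in>le_pairs. inc_smult (g (fst q) (snd q) * f (fst p) (snd p))
      (T (inc_unit (fst q) (snd q)) \<star> T (inc_unit (fst p) (snd p))))"
    by (rule sum.swap)
  also have "\<dots> = T g \<star> T f"
    unfolding inc_linear_expansion[OF T f] inc_linear_expansion[OF T g] by (simp only: bilinear_sum_mult)
  finally show ?thesis .
qed

definition height :: "'a \<Rightarrow> nat" where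
  "height i = card {z\<in>X. le z i \<and> z \<noteq> i}"

lemma height_le_card: "height i \<le> card X"
  unfolding height_def by (rule card_mono[OF finite_X]) auto

lemma height_strict_mono:
  assumes "x \<in> X" "z \<in> X" "le x z" "x \<noteq> z"
  shows "height x < height z"
proof -
  have "{w\<in>X. le w x \<and> w \<noteq> x} \<subset> {w\<in>X. le w z \<and> w \<noteq> z}"
    using assms le_trans_on le_antisym_on by blast
  then show ?thesis
    unfolding height_def by (rule psubset_card_mono[OF finite_subset[OF _ finite_X], rotated]) auto
qed

lemma ipow_zero_diagonal_support:
  assumes "n \<in> \<I>" and diag: "\<And>i. i \<in> X \<Longrightarrow> n i i = 0"
  shows "ipow n d x y \<noteq> 0 \<Longrightarrow> x \<in> X \<and> y \<in> X \<and> height x + d \<le> height y"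
proof (induct d arbitrary: x y)
  case 0
  then show ?case by (auto simp: inc_one_def split: if_splits)
next
  case (Suc d)
  then have nz: "(n \<star> ipow n d) x y \<noteq> 0" by simp
  then have xy: "x \<in> X" "y \<in> X" "le x y" by (auto simp: inc_mult_apply split: if_splits)
  then have "(\<Sum>z\<in>{z\<in>X. le x z \<and> le z y}. n x z * ipow n d z y) \<noteq> 0"
    using nz by (simp add: inc_mult_apply)
  then obtain z where z: "z \<in> X" "le x z" "n x z \<noteq> 0" "ipow n d z y \<noteq> 0"
    by (metis (mono_tags, lifting) mem_Collect_eq mult_eq_0_iff sum.neutral)
  then have "height x < height z" using diag xy by (metis height_strict_mono)
  moreover have "height z + d \<le> height y" using Suc(1)[OF z(4)] by simp
  ultimately show ?case using xy by simp
qed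

lemma zero_diagonal_nilpotent:
  assumes "n \<in> \<I>" and "\<And>i. i \<in> X \<Longrightarrow> n i i = 0"
  shows "ipow n (Suc (card X)) = 0"
proof (rule ext, rule ext, rule ccontr)
  fix x y
  assume "ipow n (Suc (card X)) x y \<noteq> 0 x y"
  then have "ipow n (Suc (card X)) x y \<noteq> 0" by (simp del: inc_pow.simps)
  then have "height x + Suc (card X) \<le> height y"
    using ipow_zero_diagonal_support[OF assms] by blast
  then show False using height_le_card[of y] by linarith
qed

lemma idempotent_zero_diagonal:
  assumes "f \<in> \<I>" "f \<star> f = f" and "\<And>i. i \<in> X \<Longrightarrow> f i i = 0"
  shows "f = 0"
  using zero_diagonal_nilpotent[OF assms(1,3)] idempotent_ipow[OF assms(1,2)] by simp

lemma idempotent_diagonal_entry: "f \<star> f = f \<Longrightarrow> i \<in> X \<Longrightarrow> f i i = 0 \<or> f i i = 1"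
  using inc_mult_diag[of i f f] by auto

lemma geometric_sum:
  assumes n: "n \<in> \<I>"
  shows "(\<one> - n) \<star> (\<Sum>i<N. ipow n i) = \<one> - ipow n N"
    and "(\<Sum>i<N. ipow n i) \<star> (\<one> - n) = \<one> - ipow n N"
proof -
  have l: "(\<one> - n) \<star> ipow n i = ipow n i - ipow n (Suc i)" for i
    by (simp add: inc_left_diff_distrib inc_one_mult)
  have r: "ipow n i \<star> (\<one> - n) = ipow n i - ipow n (Suc i)" for i
    using n by (simp add: inc_right_diff_distrib inc_mult_one ipow_Suc_right[OF n, symmetric]
        del: inc_pow.simps)
  show "(\<one> - n) \<star> (\<Sum>i<N. ipow n i) = \<one> - ipow n N"
    by (induct N) (simp_all only: lessThan_0 sum.empty inc_mult_zero inc_pow.simps diff_self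
        sum.lessThan_Suc inc_distrib_left l add_diff_eq diff_add_cancel)
  show "(\<Sum>i<N. ipow n i) \<star> (\<one> - n) = \<one> - ipow n N"
    by (induct N) (simp_all only: lessThan_0 sum.empty inc_mult_zero inc_pow.simps diff_self
        sum.lessThan_Suc inc_distrib_right r add_diff_eq diff_add_cancel)
qed

lemma unit_diagonal_invertible:
  assumes u: "u \<in> \<I>" and diag: "\<And>i. i \<in> X \<Longrightarrow> u i i = 1"
  shows "\<exists>v\<in>\<I>. u \<star> v = \<one> \<and> v \<star> u = \<one>"
proof -
  define n where "n = \<one> - u"
  have n: "n \<in> \<I>" using u by (simp add: n_def)
  have "ipow n (Suc (card X)) = 0"
    using n diag by (intro zero_diagonal_nilpotent) (simp_all add: n_def inc_one_def)
  moreover have "u = \<one> - n" by (simp add: n_def)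
  ultimately show ?thesis
    using geometric_sum[OF n, of "Suc (card X)"] by (intro bexI[of _ "\<Sum>i<Suc (card X). ipow n i"]) 
      (simp_all add: sum_in)
qed

lemma central_scalar:
  assumes conn: "connected_poset X le" and u: "u \<in> \<I>" and central: "\<And>a. a \<in> \<I> \<Longrightarrow> a \<star> u = u \<star> a"
  shows "\<exists>c. u = inc_smult c \<one>"
proof (cases "X = {}")
  case True
  then have "u = inc_smult 0 \<one>" using u by (auto simp: fun_eq_iff incidence_alg_def)
  then show ?thesis ..
next
  case False
  then obtain x0 where x0: "x0 \<in> X" by auto
  have off_diag: "u i j = 0" if "i \<noteq> j" for i j
  proof (cases "i \<in> X")
    case True
    have "(inc_unit i i \<star> u) i j = (u \<star> inc_unit i i) i j" using central[of "inc_unit i i"] True le_refl_on by simp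
    then show ?thesis using True that u le_refl_on by (simp add: inc_unit_mult_apply inc_mult_unit_apply)
  next
    case False
    then show ?thesis using incidence_alg_vanishes[OF u] by auto
  qed
  have diag_step: "u i i = u j j" if "comparable_step X le i j" for i j
  proof -
    have "u i i = u j j" if "i \<in> X" "j \<in> X" "le i j" for i j
      using central[of "inc_unit i j"] that u
      by (metis inc_mult_unit_apply inc_unit_in inc_unit_mult_apply)
    then show ?thesis using that by (auto simp: comparable_step_def)
  qed
  have "u z z = u x0 x0" if "z \<in> X" for z
  proof -
    have "(comparable_step X le)\<^sup>*\<^sup>* x0 z" using conn x0 that by (auto simp: connected_poset_def)
    then show ?thesis by (induct rule: rtranclp_induct) (simp_all add: diag_step)
  qed
  then have "u = inc_smult (u x0 x0) \<one>"
    using off_diag incidence_alg_vanishes[OF u] by (auto simp: fun_eq_iff inc_smult_apply inc_one_def)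
  then show ?thesis ..
qed

lemma idempotent_pencil:
  assumes two: "(2::'f::field) \<noteq> 0" and e: "e \<star> e = (e :: 'a \<Rightarrow> 'a \<Rightarrow> 'f)"
    and plus: "(e + g) \<star> (e + g) = e + g" and minus: "(e - g) \<star> (e - g) = e - g"
  shows "g \<star> g = 0" and "e \<star> g + g \<star> e = g"
proof -
  have p: "e \<star> g + g \<star> e + g \<star> g = g"
    using plus e by (simp add: inc_distrib_left inc_distrib_right algebra_simps)
  have m: "g \<star> g - (e \<star> g + g \<star> e) = - g"
    using minus e by (simp add: inc_right_diff_distrib inc_left_diff_distrib algebra_simps)
  have entries: "(g \<star> g) x y = 0 \<and> (e \<star> g + g \<star> e) x y = g x y" for x y
  proof -
    define s q where "s = (e \<star> g + g \<star> e) x y" and "q = (g \<star> g) x y"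
    have sq: "s + q = g x y" "q - s = - g x y"
      using fun_cong[OF fun_cong[OF p, of x], of y] fun_cong[OF fun_cong[OF m, of x], of y]
      by (simp_all add: s_def q_def)
    have "2 * q = (s + q) + (q - s)" by (simp add: algebra_simps)
    also have "\<dots> = 0" using sq by simp
    finally have "q = 0" using two by simp
    then show ?thesis using sq by (simp add: s_def q_def)
  qed
  then show "g \<star> g = 0" "e \<star> g + g \<star> e = g" by (simp_all add: fun_eq_iff)
qed

lemma idempotent_unit_turn:
  fixes a b :: "'f::field"
  assumes "s \<in> X" "t \<in> X" "u \<in> X" "le s t" "le u s" "s \<noteq> t" "s \<noteq> u" "t \<noteq> u"
    and h_def: "h = inc_unit s s + inc_smult a (inc_unit s t) + inc_smult b (inc_unit u s)"
  assumes idem: "h \<star> h = h"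
  shows "a * b = 0"
proof -
  have "(h \<star> h) u t = b * a"
    unfolding h_def using assms(1-8) le_refl_on
    by (simp add: inc_distrib_left inc_distrib_right inc_smult_mult_left inc_smult_mult_right
        inc_unit_mult_unit inc_smult_apply inc_unit_apply)
  moreover have "h u t = 0" using assms(6-8) by (simp add: h_def inc_smult_apply inc_unit_apply)
  ultimately show ?thesis using idem by (simp add: mult.commute)
qed

lemma idempotent_unit_chain:
  fixes a b c :: "'f::field"
  assumes "r \<in> X" "s \<in> X" "t \<in> X" "le r s" "le s t" "r \<noteq> s" "r \<noteq> t" "s \<noteq> t"
    and h_def: "h = inc_unit s s + inc_smult a (inc_unit r s) + inc_smult b (inc_unit s t)
      + inc_smult c (inc_unit r t)"
  assumes idem: "h \<star> h = h"
  shows "c = a * b"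
proof -
  have "le r t" using assms le_trans_on by blast
  then have "(h \<star> h) r t = a * b"
    unfolding h_def using assms(1-8) le_refl_on
    by (simp add: inc_distrib_left inc_distrib_right inc_smult_mult_left inc_smult_mult_right
        inc_unit_mult_unit inc_smult_apply inc_unit_apply)
  moreover have "h r t = c" using assms(6-8) by (simp add: h_def inc_smult_apply inc_unit_apply)
  ultimately show ?thesis using idem by simp
qed

lemma idempotent_sum_orthogonal:
  assumes two: "(2::'f::field) \<noteq> 0"
    and p: "p \<star> p = (p :: 'a \<Rightarrow> 'a \<Rightarrow> 'f)" and q: "q \<star> q = q" and pq: "(p + q) \<star> (p + q) = p + q"
  shows "p \<star> q = 0"
proof -
  have s: "p \<star> q + q \<star> p = 0"
    using pq p q by (simp add: inc_distrib_left inc_distrib_right algebra_simps)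
  have "p \<star> q + p \<star> q \<star> p = 0"
    using arg_cong[OF s, of "\<lambda>a. p \<star> a"] p by (simp add: inc_distrib_left inc_mult_assoc[symmetric])
  moreover have "p \<star> q \<star> p + q \<star> p = 0"
    using arg_cong[OF s, of "\<lambda>a. a \<star> p"] p by (simp add: inc_distrib_right inc_mult_assoc)
  ultimately have "p \<star> q = q \<star> p" by (metis add.commute add_right_cancel)
  then have "p \<star> q + p \<star> q = 0" using s by simp
  then have "2 * (p \<star> q) x y = 0" for x y by (metis mult_2 plus_fun_apply zero_fun_apply)
  then show ?thesis using two by (simp add: fun_eq_iff)
qed

lemma conjugation_cancel:
  assumes "u \<in> \<I>" "v \<in> \<I>" "u \<star> v = \<one>" "v \<star> u = \<one>" "a \<in> \<I>"
  shows "v \<star> (u \<star> (a \<star> v) \<star> u) = a" and "u \<star> (v \<star> (a \<star> u) \<star> v) = a"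
  using assms by (simp_all add: inc_mult_assoc[symmetric] inc_one_mult)
    (simp_all add: inc_mult_assoc inc_mult_one)

lemma conjugation_inj:
  assumes "u \<in> \<I>" "v \<in> \<I>" "u \<star> v = \<one>" "v \<star> u = \<one>" "a \<in> \<I>" "b \<in> \<I>"
    and "u \<star> (a \<star> v) = u \<star> (b \<star> v)"
  shows "a = b"
  using conjugation_cancel(1)[OF assms(1-5)] conjugation_cancel(1)[OF assms(1-4,6)] assms(7) by metis

lemma conjugation_mult:
  assumes "v \<star> u = \<one>" "q \<in> \<I>"
  shows "u \<star> (p \<star> v) \<star> (u \<star> (q \<star> v)) = u \<star> ((p \<star> q) \<star> v)"
proof -
  have "u \<star> (p \<star> v) \<star> (u \<star> (q \<star> v)) = u \<star> (p \<star> ((v \<star> u) \<star> (q \<star> v)))"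
    by (simp only: inc_mult_assoc)
  then show ?thesis using assms by (simp add: inc_one_mult inc_mult_assoc)
qed

lemma diagonal_unit_anticommutator_apply:
  assumes "s \<in> X" "g \<in> \<I>"
  shows "(inc_unit s s \<star> g + g \<star> inc_unit s s) i j = (if i = s then g i j else 0) + (if j = s then g i j else 0)"
  using assms le_refl_on by (simp add: inc_unit_mult_apply inc_mult_unit_apply)

lemma single_entry_eq_smult_unit:
  assumes "\<And>i j. g i j \<noteq> 0 \<Longrightarrow> i = s \<and> j = t"
  shows "g = inc_smult (g s t) (inc_unit s t)"
  using assms by (fastforce simp: fun_eq_iff inc_smult_apply inc_unit_apply)

end

section \<open>Complete families of orthogonal idempotents\<close>

locale complete_idempotents = finite_poset +
  fixes E :: "'a \<Rightarrow> 'a \<Rightarrow> 'a \<Rightarrow> 'f::field"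
  assumes E_in: "x \<in> X \<Longrightarrow> E x \<in> \<I>"
    and E_idempotent: "x \<in> X \<Longrightarrow> E x \<star> E x = E x"
    and E_nonzero: "x \<in> X \<Longrightarrow> E x \<noteq> 0"
    and E_orthogonal: "x \<in> X \<Longrightarrow> y \<in> X \<Longrightarrow> x \<noteq> y \<Longrightarrow> E x \<star> E y = 0"
    and E_sum: "(\<Sum>x\<in>X. E x) = \<one>"
begin

lemma E_diagonal_orthogonal:
  "x \<in> X \<Longrightarrow> y \<in> X \<Longrightarrow> x \<noteq> y \<Longrightarrow> z \<in> X \<Longrightarrow> E x z z * E y z z = 0"
  using inc_mult_diag[of z "E x" "E y"] E_orthogonal by simp

lemma E_diagonal_sum: "z \<in> X \<Longrightarrow> (\<Sum>x\<in>X. E x z z) = 1"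
  using fun_cong[OF fun_cong[OF E_sum, of z], of z] by (simp add: sum_fun_apply inc_one_def)

lemma E_diagonal_one: "x \<in> X \<Longrightarrow> \<exists>z\<in>X. E x z z = 1"
  using idempotent_zero_diagonal[OF E_in E_idempotent] idempotent_diagonal_entry[OF E_idempotent]
    E_nonzero by blast

definition diag_pos :: "'a \<Rightarrow> 'a" where
  "diag_pos x = (SOME z. z \<in> X \<and> E x z z = 1)"

lemma diag_pos_spec: "x \<in> X \<Longrightarrow> diag_pos x \<in> X \<and> E x (diag_pos x) (diag_pos x) = 1"
  unfolding diag_pos_def by (rule someI_ex) (use E_diagonal_one in blast)

lemma inj_diag_pos: "inj_on diag_pos X"
proof (rule inj_onI, rule ccontr)
  fix x y assume "x \<in> X" "y \<in> X" "diag_pos x = diag_pos y" "x \<noteq> y"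
  then show False using E_diagonal_orthogonal[of x y "diag_pos x"] diag_pos_spec by fastforce
qed

lemma bij_diag_pos: "bij_betw diag_pos X X"
  using endo_inj_surj[OF finite_X _ inj_diag_pos] diag_pos_spec inj_diag_pos by (auto simp: bij_betw_def)

lemma E_diagonal:
  assumes x: "x \<in> X" and z: "z \<in> X"
  shows "E x z z = (if z = diag_pos x then 1 else 0)"
proof (cases "z = diag_pos x")
  case False
  obtain y where y: "y \<in> X" "z = diag_pos y" using bij_diag_pos z by (auto simp: bij_betw_def)
  then have "E x z z * E y z z = 0" using E_diagonal_orthogonal x z False by blast
  then show ?thesis using diag_pos_spec y False by simp
qed (use diag_pos_spec x in simp)

abbreviation diag_pos_unit :: "'a \<Rightarrow> 'a \<Rightarrow> 'a \<Rightarrow> 'f" where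
  "diag_pos_unit x \<equiv> inc_unit (diag_pos x) (diag_pos x)"

lemma diag_pos_unit_in [simp]: "x \<in> X \<Longrightarrow> diag_pos_unit x \<in> \<I>"
  using diag_pos_spec le_refl_on by simp

definition conj_left :: "'a \<Rightarrow> 'a \<Rightarrow> 'f" where
  "conj_left = (\<Sum>x\<in>X. diag_pos_unit x \<star> E x)"

definition conj_right :: "'a \<Rightarrow> 'a \<Rightarrow> 'f" where
  "conj_right = (\<Sum>x\<in>X. E x \<star> diag_pos_unit x)"

lemma conj_left_in: "conj_left \<in> \<I>"
  unfolding conj_left_def by (rule sum_in) simp

lemma conj_right_in: "conj_right \<in> \<I>"
  unfolding conj_right_def by (rule sum_in) simp

lemma E_mult_conj_right:
  assumes x: "x \<in> X"
  shows "E x \<star> conj_right = E x \<star> diag_pos_unit x"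
proof -
  have "E x \<star> conj_right = (\<Sum>y\<in>X. E x \<star> E y \<star> diag_pos_unit y)"
    by (simp add: conj_right_def inc_mult_sum inc_mult_assoc)
  also have "\<dots> = (\<Sum>y\<in>X. if y = x then E x \<star> diag_pos_unit x else 0)"
    using x by (intro sum.cong refl) (simp add: E_orthogonal E_idempotent)
  finally show ?thesis using x finite_X by simp
qed

lemma conj_left_mult_E:
  assumes x: "x \<in> X"
  shows "conj_left \<star> E x = diag_pos_unit x \<star> E x"
proof -
  have "conj_left \<star> E x = (\<Sum>y\<in>X. diag_pos_unit y \<star> (E y \<star> E x))"
    by (simp add: conj_left_def inc_sum_mult inc_mult_assoc)
  also have "\<dots> = (\<Sum>y\<in>X. if y = x then diag_pos_unit x \<star> E x else 0)"
    using x by (intro sum.cong refl) (simp add: E_orthogonal E_idempotent)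
  finally show ?thesis using x finite_X by simp
qed

lemma diag_pos_unit_sandwich: "x \<in> X \<Longrightarrow> diag_pos_unit x \<star> (E x \<star> diag_pos_unit x) = diag_pos_unit x"
  using inc_unit_sandwich[OF _ E_in] diag_pos_spec E_diagonal by simp

lemma conj_left_right: "conj_left \<star> conj_right = \<one>"
proof -
  have "conj_left \<star> conj_right = (\<Sum>x\<in>X. diag_pos_unit x \<star> (E x \<star> conj_right))"
    by (simp add: conj_left_def inc_sum_mult inc_mult_assoc)
  also have "\<dots> = (\<Sum>x\<in>X. diag_pos_unit x)"
    by (intro sum.cong) (simp_all add: E_mult_conj_right diag_pos_unit_sandwich)
  also have "\<dots> = \<one>"
    by (simp only: inc_one_eq_sum_units sum.reindex_bij_betw[OF bij_diag_pos, of "\<lambda>z. inc_unit z z"])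
  finally show ?thesis .
qed

lemma conj_left_diagonal: "z \<in> X \<Longrightarrow> conj_left z z = 1"
proof -
  assume z: "z \<in> X"
  have "conj_left z z = (\<Sum>x\<in>X. (diag_pos_unit x \<star> E x) z z)"
    by (simp add: conj_left_def sum_fun_apply)
  also have "\<dots> = (\<Sum>x\<in>X. E x z z)"
    using z diag_pos_spec le_refl_on by (intro sum.cong refl) (simp add: inc_unit_mult_apply E_in E_diagonal)
  finally show ?thesis using E_diagonal_sum[OF z] by simp
qed

lemma conj_right_left: "conj_right \<star> conj_left = \<one>"
proof -
  obtain w where w: "w \<in> \<I>" "conj_left \<star> w = \<one>" "w \<star> conj_left = \<one>"
    using unit_diagonal_invertible[OF conj_left_in conj_left_diagonal] by blast
  have "conj_right = (w \<star> conj_left) \<star> conj_right" by (simp add: w inc_one_mult conj_right_in)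
  also have "\<dots> = w" by (simp only: inc_mult_assoc conj_left_right inc_mult_one[OF w(1)])
  finally show ?thesis using w by simp
qed

lemma conjugate_E: "x \<in> X \<Longrightarrow> conj_left \<star> (E x \<star> conj_right) = diag_pos_unit x"
  by (simp add: E_mult_conj_right inc_mult_assoc[symmetric] conj_left_mult_E)
    (simp add: inc_mult_assoc diag_pos_unit_sandwich)

end

section \<open>Linear bijections preserving idempotents\<close>

locale idempotent_preserver = finite_poset +
  fixes \<psi> :: "('a \<Rightarrow> 'a \<Rightarrow> 'f::field) \<Rightarrow> ('a \<Rightarrow> 'a \<Rightarrow> 'f)"
  assumes linear: "inc_linear X le \<psi>"
    and bij: "bij_betw \<psi> \<I> \<I>"
    and unital: "\<psi> \<one> = \<one>"
    and idempotent: "e \<in> \<I> \<Longrightarrow> e \<star> e = e \<Longrightarrow> \<psi> e \<star> \<psi> e = \<psi> e"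
    and two: "(2::'f) \<noteq> 0"
begin

lemma image_in: "a \<in> \<I> \<Longrightarrow> \<psi> a \<in> \<I>"
  using bij by (auto simp: bij_betw_def)

lemma image_eq_zero: "a \<in> \<I> \<Longrightarrow> \<psi> a = 0 \<Longrightarrow> a = 0"
  using bij inc_linear_zero[OF linear] by (auto simp: bij_betw_def inj_on_def)

lemma image_orthogonal:
  assumes "e \<in> \<I>" "f \<in> \<I>" "e \<star> e = e" "f \<star> f = f" "e \<star> f = 0" "f \<star> e = 0"
  shows "\<psi> e \<star> \<psi> f = 0"
proof (rule idempotent_sum_orthogonal[OF two])
  have "(e + f) \<star> (e + f) = e + f"
    using assms by (simp add: inc_distrib_left inc_distrib_right)
  then show "(\<psi> e + \<psi> f) \<star> (\<psi> e + \<psi> f) = \<psi> e + \<psi> f"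
    using assms idempotent[of "e + f"] by (simp add: inc_linear_add[OF linear])
qed (use assms idempotent in auto)

lemma image_pencil:
  assumes "e \<in> \<I>" "g \<in> \<I>" "e \<star> e = e" "(e + g) \<star> (e + g) = e + g" "(e - g) \<star> (e - g) = e - g"
  shows "\<psi> e \<star> \<psi> g + \<psi> g \<star> \<psi> e = \<psi> g"
  using idempotent_pencil(2)[OF two, of "\<psi> e" "\<psi> g"] assms idempotent[of e] idempotent[of "e + g"]
    idempotent[of "e - g"]
  by (simp add: inc_linear_add[OF linear] inc_linear_diff[OF linear])

lemma conjugate:
  assumes uv: "u \<in> \<I>" "v \<in> \<I>" "u \<star> v = \<one>" "v \<star> u = \<one>"
  shows "idempotent_preserver X le (\<lambda>a. u \<star> (\<psi> a \<star> v))"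
proof
  show "inc_linear X le (\<lambda>a. u \<star> (\<psi> a \<star> v))"
    using linear unfolding inc_linear_def
    by (simp add: inc_add_eq_plus inc_distrib_left inc_distrib_right inc_smult_mult_left inc_smult_mult_right)
  show "u \<star> (\<psi> \<one> \<star> v) = \<one>"
    using uv by (simp add: unital inc_one_mult)
  show "u \<star> (\<psi> e \<star> v) \<star> (u \<star> (\<psi> e \<star> v)) = u \<star> (\<psi> e \<star> v)" if "e \<in> \<I>" "e \<star> e = e" for e
    using conjugation_mult[OF uv(4) image_in[OF that(1)]] idempotent[OF that] by simp
  have "inj_on (\<lambda>a. u \<star> (\<psi> a \<star> v)) \<I>"
  proof (rule inj_onI)
    fix a b assume "a \<in> \<I>" "b \<in> \<I>" "u \<star> (\<psi> a \<star> v) = u \<star> (\<psi> b \<star> v)"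
    then have "\<psi> a = \<psi> b" by (intro conjugation_inj[OF uv image_in image_in])
    then show "a = b" using bij \<open>a \<in> \<I>\<close> \<open>b \<in> \<I>\<close> by (auto simp: bij_betw_def inj_on_def)
  qed
  moreover have "b \<in> (\<lambda>a. u \<star> (\<psi> a \<star> v)) ` \<I>" if "b \<in> \<I>" for b
  proof -
    obtain a where "a \<in> \<I>" "\<psi> a = v \<star> (b \<star> u)"
      using bij by (metis bij_betw_imp_surj_on imageE inc_mult_in)
    then show ?thesis using conjugation_cancel(2)[OF uv that] by (auto intro!: image_eqI)
  qed
  ultimately show "bij_betw (\<lambda>a. u \<star> (\<psi> a \<star> v)) \<I> \<I>"
    unfolding bij_betw_def using image_in by auto
qed (fact finite_X poset two)+

end

locale diagonal_idempotent_preserver = idempotent_preserver +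
  fixes \<sigma> :: "'a \<Rightarrow> 'a"
  assumes bij_\<sigma>: "bij_betw \<sigma> X X"
    and diagonal_units: "x \<in> X \<Longrightarrow> \<psi> (inc_unit x x) = inc_unit (\<sigma> x) (\<sigma> x)"
    and connected: "connected_poset X le"
begin

lemma \<sigma>_in: "x \<in> X \<Longrightarrow> \<sigma> x \<in> X"
  using bij_\<sigma> by (auto simp: bij_betw_def)

lemma \<sigma>_eq_iff: "x \<in> X \<Longrightarrow> y \<in> X \<Longrightarrow> \<sigma> x = \<sigma> y \<longleftrightarrow> x = y"
  using bij_\<sigma> by (auto simp: bij_betw_def inj_on_def)

lemma \<sigma>_surj: "i \<in> X \<Longrightarrow> \<exists>a\<in>X. i = \<sigma> a"
  using bij_\<sigma> by (auto simp: bij_betw_def)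

lemma unit_image_anticommutator:
  assumes x: "x \<in> X" and y: "y \<in> X" and z: "z \<in> X" and xy: "le x y" "x \<noteq> y"
  shows "inc_unit (\<sigma> z) (\<sigma> z) \<star> \<psi> (inc_unit x y) + \<psi> (inc_unit x y) \<star> inc_unit (\<sigma> z) (\<sigma> z)
    = (if z = x \<or> z = y then \<psi> (inc_unit x y) else 0)"
proof -
  let ?g = "inc_unit x y" and ?d = "\<lambda>z. inc_unit (\<sigma> z) (\<sigma> z)"
  have pencil: "?d z \<star> \<psi> ?g + \<psi> ?g \<star> ?d z = \<psi> ?g" if "z = x \<or> z = y" for z
  proof -
    have z: "z \<in> X" using that x y by auto
    have "(inc_unit z z + ?g) \<star> (inc_unit z z + ?g) = inc_unit z z + ?g"
      "(inc_unit z z - ?g) \<star> (inc_unit z z - ?g) = inc_unit z z - ?g"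
      using that x y xy le_refl_on
      by (auto simp: inc_distrib_left inc_distrib_right inc_right_diff_distrib inc_left_diff_distrib
          inc_unit_mult_unit)
    from image_pencil[OF inc_unit_in[OF z z le_refl_on[OF z]] inc_unit_in[OF x y xy(1)]
        inc_unit_idempotent[OF z] this]
    show ?thesis using diagonal_units[OF z] by simp
  qed
  have "?d z \<star> \<psi> ?g + \<psi> ?g \<star> ?d z = 0" if "z \<noteq> x" "z \<noteq> y"
  proof -
    let ?e = "inc_unit x x + inc_unit z z"
    have e: "?e \<in> \<I>" "?e \<star> ?e = ?e" using x z that le_refl_on
      by (simp_all add: inc_distrib_left inc_distrib_right inc_unit_mult_unit)
    have "(?e + ?g) \<star> (?e + ?g) = ?e + ?g" "(?e - ?g) \<star> (?e - ?g) = ?e - ?g"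
      using that x y z xy le_refl_on
      by (auto simp: inc_distrib_left inc_distrib_right inc_right_diff_distrib inc_left_diff_distrib
          inc_unit_mult_unit)
    then have "\<psi> ?e \<star> \<psi> ?g + \<psi> ?g \<star> \<psi> ?e = \<psi> ?g"
      using image_pencil[of ?e ?g] e x y xy by simp
    moreover have "\<psi> ?e = ?d x + ?d z"
      using x z le_refl_on by (simp add: inc_linear_add[OF linear] diagonal_units)
    ultimately have "(?d x \<star> \<psi> ?g + \<psi> ?g \<star> ?d x) + (?d z \<star> \<psi> ?g + \<psi> ?g \<star> ?d z) = \<psi> ?g"
      by (simp add: inc_distrib_left inc_distrib_right algebra_simps)
    then show ?thesis using pencil[of x] by simp
  qed
  then show ?thesis using pencil by auto
qed

lemma unit_image_support:
  assumes x: "x \<in> X" and y: "y \<in> X" and xy: "le x y" "x \<noteq> y"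
    and nz: "\<psi> (inc_unit x y) i j \<noteq> 0"
  shows "(i = \<sigma> x \<and> j = \<sigma> y) \<or> (i = \<sigma> y \<and> j = \<sigma> x)"
proof -
  define g where "g = \<psi> (inc_unit x y)"
  have g: "g \<in> \<I>" using x y xy by (simp add: g_def image_in)
  have entries: "(if i = \<sigma> z then g i j else 0) + (if j = \<sigma> z then g i j else 0)
      = (if z = x \<or> z = y then g i j else 0)" if "z \<in> X" for z
    using fun_cong[OF fun_cong[OF unit_image_anticommutator[OF x y that xy], of i], of j]
      diagonal_unit_anticommutator_apply[OF \<sigma>_in[OF that] g]
    by (simp add: g_def)
  have gij: "g i j \<noteq> 0" "g i j + g i j \<noteq> 0"
    using nz two by (simp_all add: g_def flip: mult_2)
  obtain a b where ab: "a \<in> X" "i = \<sigma> a" "b \<in> X" "j = \<sigma> b"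
    using \<sigma>_surj incidence_alg_vanishes[OF g] gij(1) by meson
  have "a = x \<or> a = y" "b = x \<or> b = y"
    using entries[OF ab(1)] entries[OF ab(3)] ab gij by (auto split: if_splits)
  moreover have "a \<noteq> b"
    using entries[OF ab(1)] ab gij calculation by auto
  ultimately show ?thesis using ab by auto
qed

definition forward :: "'a \<Rightarrow> 'a \<Rightarrow> bool" where
  "forward x y \<longleftrightarrow> le (\<sigma> x) (\<sigma> y)"

definition scale where
  "scale x y = (if forward x y then \<psi> (inc_unit x y) (\<sigma> x) (\<sigma> y) else \<psi> (inc_unit x y) (\<sigma> y) (\<sigma> x))"

lemma forward_refl: "x \<in> X \<Longrightarrow> forward x x"
  by (simp add: forward_def le_refl_on \<sigma>_in)

lemma scale_refl: "x \<in> X \<Longrightarrow> scale x x = 1"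
  by (simp add: scale_def forward_refl diagonal_units inc_unit_apply)

lemma unit_image_strict:
  assumes x: "x \<in> X" and y: "y \<in> X" and xy: "le x y" "x \<noteq> y"
  shows "\<psi> (inc_unit x y) = inc_smult (scale x y)
      (if forward x y then inc_unit (\<sigma> x) (\<sigma> y) else inc_unit (\<sigma> y) (\<sigma> x))
    \<and> scale x y \<noteq> 0 \<and> (forward x y \<or> le (\<sigma> y) (\<sigma> x))"
proof -
  define g where "g = \<psi> (inc_unit x y)"
  have g: "g \<in> \<I>" using x y xy by (simp add: g_def image_in)
  have support: "g i j \<noteq> 0 \<Longrightarrow> (i = \<sigma> x \<and> j = \<sigma> y) \<or> (i = \<sigma> y \<and> j = \<sigma> x)" for i j
    using unit_image_support[OF x y xy] by (simp add: g_def)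
  have "g \<noteq> 0"
    using image_eq_zero[OF inc_unit_in[OF x y xy(1)]] inc_unit_neq_zero[of x y] by (auto simp: g_def)
  then obtain i j where ij: "g i j \<noteq> 0" by (auto simp: fun_eq_iff)
  have le_ij: "g i j \<noteq> 0 \<Longrightarrow> le i j" for i j using incidence_alg_vanishes[OF g] by blast
  have antisym: "\<not> (le (\<sigma> x) (\<sigma> y) \<and> le (\<sigma> y) (\<sigma> x))"
    using le_antisym_on \<sigma>_in \<sigma>_eq_iff x y xy(2) by metis
  show ?thesis
  proof (cases "forward x y")
    case True
    then have "g i j \<noteq> 0 \<Longrightarrow> i = \<sigma> x \<and> j = \<sigma> y" for i j
      using support le_ij antisym by (fastforce simp: forward_def)
    then show ?thesis
      using single_entry_eq_smult_unit[of g] ij True by (auto simp: scale_def g_def)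
  next
    case False
    then have "g i j \<noteq> 0 \<Longrightarrow> i = \<sigma> y \<and> j = \<sigma> x" for i j
      using support le_ij by (fastforce simp: forward_def)
    then show ?thesis
      using single_entry_eq_smult_unit[of g] ij False le_ij by (auto simp: scale_def g_def)
  qed
qed

lemma unit_image:
  assumes x: "x \<in> X" and y: "y \<in> X" and xy: "le x y"
  shows "scale x y \<noteq> 0"
    and "forward x y \<Longrightarrow> \<psi> (inc_unit x y) = inc_smult (scale x y) (inc_unit (\<sigma> x) (\<sigma> y))"
    and "\<not> forward x y \<Longrightarrow> \<psi> (inc_unit x y) = inc_smult (scale x y) (inc_unit (\<sigma> y) (\<sigma> x))
      \<and> le (\<sigma> y) (\<sigma> x)"
  using unit_image_strict[OF x y xy] x
  by (cases "x = y"; simp add: diagonal_units scale_refl forward_refl)+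

lemma forward_source_consistent:
  assumes x: "x \<in> X" and y: "y \<in> X" and z: "z \<in> X" and "le x y" "le x z"
    and "x \<noteq> y" "x \<noteq> z" "y \<noteq> z" and "forward x y" "\<not> forward x z"
  shows False
proof -
  let ?h = "inc_unit x x + inc_unit x y + inc_unit x z"
  have h: "?h \<in> \<I>" "?h \<star> ?h = ?h"
    using assms le_refl_on by (simp_all add: inc_distrib_left inc_distrib_right inc_unit_mult_unit)
  have "\<psi> ?h = inc_unit (\<sigma> x) (\<sigma> x) + inc_smult (scale x y) (inc_unit (\<sigma> x) (\<sigma> y))
      + inc_smult (scale x z) (inc_unit (\<sigma> z) (\<sigma> x))"
    using assms le_refl_on by (simp add: inc_linear_add[OF linear] diagonal_units unit_image)
  then have "scale x y * scale x z = 0"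
    using assms unit_image(3)[of x z] idempotent[OF h] \<sigma>_in \<sigma>_eq_iff
    by (intro idempotent_unit_turn[of "\<sigma> x" "\<sigma> y" "\<sigma> z"]) (auto simp: forward_def)
  then show False using unit_image(1) assms by simp
qed

lemma forward_target_consistent:
  assumes x: "x \<in> X" and y: "y \<in> X" and z: "z \<in> X" and "le x z" "le y z"
    and "x \<noteq> y" "x \<noteq> z" "y \<noteq> z" and "forward x z" "\<not> forward y z"
  shows False
proof -
  let ?h = "inc_unit z z + inc_unit y z + inc_unit x z"
  have h: "?h \<in> \<I>" "?h \<star> ?h = ?h"
    using assms le_refl_on by (simp_all add: inc_distrib_left inc_distrib_right inc_unit_mult_unit)
  have "\<psi> ?h = inc_unit (\<sigma> z) (\<sigma> z) + inc_smult (scale y z) (inc_unit (\<sigma> z) (\<sigma> y))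
      + inc_smult (scale x z) (inc_unit (\<sigma> x) (\<sigma> z))"
    using assms le_refl_on by (simp add: inc_linear_add[OF linear] diagonal_units unit_image)
  then have "scale y z * scale x z = 0"
    using assms unit_image(3)[of y z] idempotent[OF h] \<sigma>_in \<sigma>_eq_iff
    by (intro idempotent_unit_turn[of "\<sigma> z" "\<sigma> y" "\<sigma> x"]) (auto simp: forward_def)
  then show False using unit_image(1) assms by simp
qed

lemma forward_same_source:
  "x \<in> X \<Longrightarrow> y \<in> X \<Longrightarrow> z \<in> X \<Longrightarrow> le x y \<Longrightarrow> le x z \<Longrightarrow> x \<noteq> y \<Longrightarrow> x \<noteq> z \<Longrightarrow>
    forward x y = forward x z"
  using forward_source_consistent[of x y z] forward_source_consistent[of x z y] by blast

lemma forward_same_target: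
  "x \<in> X \<Longrightarrow> y \<in> X \<Longrightarrow> z \<in> X \<Longrightarrow> le x z \<Longrightarrow> le y z \<Longrightarrow> x \<noteq> z \<Longrightarrow> y \<noteq> z \<Longrightarrow>
    forward x z = forward y z"
  using forward_target_consistent[of x y z] forward_target_consistent[of y x z] by blast

lemma forward_chain:
  assumes "x \<in> X" "y \<in> X" "z \<in> X" "le x y" "le y z" "x \<noteq> y" "y \<noteq> z"
  shows "forward x y = forward y z"
proof -
  have "le x z" "x \<noteq> z" using assms le_trans_on le_antisym_on by blast+
  then show ?thesis
    using forward_same_source[of x y z] forward_same_target[of x y z] assms by simp
qed

lemma scale_chain_strict:
  assumes x: "x \<in> X" and y: "y \<in> X" and z: "z \<in> X" and xy: "le x y" and yz: "le y z"
    and ne: "x \<noteq> y" "y \<noteq> z"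
  shows "scale x z = scale x y * scale y z"
proof -
  have xz: "le x z" "x \<noteq> z" using assms ne le_trans_on le_antisym_on by blast+
  have same: "forward x y = forward y z" "forward x z = forward x y"
    using forward_chain[OF x y z xy yz] forward_same_source[OF x y z xy xz(1)] ne xz by auto
  have s: "\<sigma> x \<noteq> \<sigma> y" "\<sigma> x \<noteq> \<sigma> z" "\<sigma> y \<noteq> \<sigma> z" "\<sigma> x \<in> X" "\<sigma> y \<in> X" "\<sigma> z \<in> X"
    using ne xz x y z \<sigma>_eq_iff \<sigma>_in by auto
  show ?thesis
  proof (cases "forward x y")
    case True
    let ?h = "inc_unit y y + inc_unit x y + inc_unit y z + inc_unit x z"
    have h: "?h \<in> \<I>" "?h \<star> ?h = ?h"
      using assms xz ne le_refl_on by (simp_all add: inc_distrib_left inc_distrib_right inc_unit_mult_unit)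
    have "\<psi> ?h = inc_unit (\<sigma> y) (\<sigma> y) + inc_smult (scale x y) (inc_unit (\<sigma> x) (\<sigma> y))
        + inc_smult (scale y z) (inc_unit (\<sigma> y) (\<sigma> z)) + inc_smult (scale x z) (inc_unit (\<sigma> x) (\<sigma> z))"
      using assms xz True same le_refl_on by (simp add: inc_linear_add[OF linear] diagonal_units unit_image)
    then show ?thesis
      using idempotent[OF h] s True same
      by (intro idempotent_unit_chain[of "\<sigma> x" "\<sigma> y" "\<sigma> z"]) (auto simp: forward_def)
  next
    case False
    let ?h = "inc_unit y y + inc_unit y z + inc_unit x y + inc_unit x z"
    have h: "?h \<in> \<I>" "?h \<star> ?h = ?h"
      using assms xz ne le_refl_on
      by (simp_all add: inc_distrib_left inc_distrib_right inc_unit_mult_unit)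
    have "\<psi> ?h = inc_unit (\<sigma> y) (\<sigma> y) + inc_smult (scale y z) (inc_unit (\<sigma> z) (\<sigma> y))
        + inc_smult (scale x y) (inc_unit (\<sigma> y) (\<sigma> x)) + inc_smult (scale x z) (inc_unit (\<sigma> z) (\<sigma> x))"
      using assms xz False same le_refl_on by (simp add: inc_linear_add[OF linear] diagonal_units unit_image)
    then show ?thesis
      using idempotent[OF h] s False same unit_image(3)[OF x y xy] unit_image(3)[OF y z yz]
      by (subst mult.commute, intro idempotent_unit_chain[of "\<sigma> z" "\<sigma> y" "\<sigma> x"]) auto
  qed
qed

lemma scale_chain:
  assumes "x \<in> X" "y \<in> X" "z \<in> X" "le x y" "le y z"
  shows "scale x z = scale x y * scale y z"
  using scale_chain_strict[OF assms] assms(1,2) scale_refl by (cases "x = y \<or> y = z") auto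

definition edge_forward :: "'a \<Rightarrow> 'a \<Rightarrow> bool" where
  "edge_forward a b \<longleftrightarrow> (if le a b then forward a b else forward b a)"

lemma edge_forward_adjacent:
  assumes p: "p \<in> X" and v: "v \<in> X" and w: "w \<in> X" and "p \<noteq> v" "p \<noteq> w"
    and "le p v \<or> le v p" "le p w \<or> le w p"
  shows "edge_forward p v = edge_forward p w"
  using assms forward_same_source[OF p v w] forward_same_target[OF v w p]
      forward_chain[OF w p v] forward_chain[OF v p w] le_antisym_on[OF v p] le_antisym_on[OF w p]
  by (auto simp: edge_forward_def)

lemma edge_forward_sym:
  "a \<in> X \<Longrightarrow> b \<in> X \<Longrightarrow> a \<noteq> b \<Longrightarrow> le a b \<or> le b a \<Longrightarrow> edge_forward a b = edge_forward b a"
  using le_antisym_on by (auto simp: edge_forward_def)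

lemma forward_constant: "\<exists>b. \<forall>x\<in>X. \<forall>y\<in>X. le x y \<longrightarrow> x \<noteq> y \<longrightarrow> forward x y = b"
proof (cases "\<exists>x\<in>X. \<exists>y\<in>X. le x y \<and> x \<noteq> y")
  case False
  then show ?thesis by blast
next
  case True
  then obtain x0 y0 where e0: "x0 \<in> X" "y0 \<in> X" "le x0 y0" "x0 \<noteq> y0" by blast
  define all_edges where "all_edges z \<longleftrightarrow>
    (\<forall>v\<in>X. z \<noteq> v \<and> (le z v \<or> le v z) \<longrightarrow> edge_forward z v = forward x0 y0)" for z
  have base: "all_edges x0"
    unfolding all_edges_def
  proof (intro ballI impI)
    fix v assume "v \<in> X" "x0 \<noteq> v \<and> (le x0 v \<or> le v x0)"
    then have "edge_forward x0 v = edge_forward x0 y0"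
      using edge_forward_adjacent[OF e0(1) _ e0(2)] e0 by blast
    then show "edge_forward x0 v = forward x0 y0" using e0(3) by (simp add: edge_forward_def)
  qed
  have step: "all_edges z" if hy: "all_edges y" and yz: "comparable_step X le y z" for y z
  proof (cases "y = z")
    case False
    have yz': "y \<in> X" "z \<in> X" "le y z \<or> le z y" using yz by (auto simp: comparable_step_def)
    have "edge_forward z y = forward x0 y0"
      using hy yz' False edge_forward_sym[of y z] unfolding all_edges_def by metis
    then show ?thesis
      unfolding all_edges_def using edge_forward_adjacent[of z y] yz' False by metis
  qed (use hy in simp)
  have all: "all_edges z" if "z \<in> X" for z
  proof -
    have "(comparable_step X le)\<^sup>*\<^sup>* x0 z" using connected e0(1) that by (auto simp: connected_poset_def)
    then show ?thesis by (induct rule: rtranclp_induct) (simp_all add: base step)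
  qed
  have "forward x y = forward x0 y0" if "x \<in> X" "y \<in> X" "le x y" "x \<noteq> y" for x y
  proof -
    have "edge_forward x y = forward x0 y0" using all[OF that(1)] that unfolding all_edges_def by blast
    then show ?thesis using that(3) by (simp add: edge_forward_def)
  qed
  then show ?thesis by blast
qed

lemma unit_image_all_forward:
  assumes fw: "\<And>x y. x \<in> X \<Longrightarrow> y \<in> X \<Longrightarrow> le x y \<Longrightarrow> x \<noteq> y \<Longrightarrow> forward x y"
    and xy: "x \<in> X" "y \<in> X" "le x y"
  shows "\<psi> (inc_unit x y) = inc_smult (scale x y) (inc_unit (\<sigma> x) (\<sigma> y)) \<and> le (\<sigma> x) (\<sigma> y)"
proof -
  have "forward x y" using fw[OF xy] forward_refl[OF xy(1)] by blast
  then show ?thesis using unit_image(2)[OF xy] by (simp add: forward_def)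
qed

lemma unit_image_all_backward:
  assumes bw: "\<And>x y. x \<in> X \<Longrightarrow> y \<in> X \<Longrightarrow> le x y \<Longrightarrow> x \<noteq> y \<Longrightarrow> \<not> forward x y"
    and xy: "x \<in> X" "y \<in> X" "le x y"
  shows "\<psi> (inc_unit x y) = inc_smult (scale x y) (inc_unit (\<sigma> y) (\<sigma> x)) \<and> le (\<sigma> y) (\<sigma> x)"
proof (cases "x = y")
  case True
  then show ?thesis using xy by (simp add: diagonal_units scale_refl le_refl_on \<sigma>_in)
next
  case False
  then show ?thesis using unit_image(3)[OF xy] bw[OF xy] by simp
qed

lemma units_mult_all_forward:
  assumes fw: "\<And>x y. x \<in> X \<Longrightarrow> y \<in> X \<Longrightarrow> le x y \<Longrightarrow> x \<noteq> y \<Longrightarrow> forward x y"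
    and xy: "x \<in> X" "y \<in> X" "le x y" and zw: "z \<in> X" "w \<in> X" "le z w"
  shows "\<psi> (inc_unit x y \<star> inc_unit z w) = \<psi> (inc_unit x y) \<star> \<psi> (inc_unit z w)"
proof (cases "y = z")
  case True
  then have xw: "le x w" using xy zw le_trans_on by blast
  have "\<psi> (inc_unit x y \<star> inc_unit z w) = inc_smult (scale x y * scale y w) (inc_unit (\<sigma> x) (\<sigma> w))"
    using True xy zw xw by (simp add: inc_unit_mult_unit unit_image_all_forward[OF fw] scale_chain)
  also have "\<dots> = \<psi> (inc_unit x y) \<star> \<psi> (inc_unit z w)"
    using True xy zw unit_image_all_forward[OF fw] \<sigma>_in
    by (simp add: inc_smult_mult_left inc_smult_mult_right inc_smult_smult inc_unit_mult_unit mult.commute)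
  finally show ?thesis .
next
  case False
  then have "\<sigma> y \<noteq> \<sigma> z" using xy zw \<sigma>_eq_iff by simp
  then show ?thesis
    using False xy zw unit_image_all_forward[OF fw] \<sigma>_in
    by (simp add: inc_smult_mult_left inc_smult_mult_right inc_unit_mult_unit inc_linear_zero[OF linear])
qed

lemma units_antimult_all_backward:
  assumes bw: "\<And>x y. x \<in> X \<Longrightarrow> y \<in> X \<Longrightarrow> le x y \<Longrightarrow> x \<noteq> y \<Longrightarrow> \<not> forward x y"
    and xy: "x \<in> X" "y \<in> X" "le x y" and zw: "z \<in> X" "w \<in> X" "le z w"
  shows "\<psi> (inc_unit x y \<star> inc_unit z w) = \<psi> (inc_unit z w) \<star> \<psi> (inc_unit x y)"
proof (cases "y = z")
  case True
  then have xw: "le x w" using xy zw le_trans_on by blast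
  have "\<psi> (inc_unit x y \<star> inc_unit z w) = inc_smult (scale x y * scale y w) (inc_unit (\<sigma> w) (\<sigma> x))"
    using True xy zw xw by (simp add: inc_unit_mult_unit unit_image_all_backward[OF bw] scale_chain)
  also have "\<dots> = \<psi> (inc_unit z w) \<star> \<psi> (inc_unit x y)"
    using True xy zw unit_image_all_backward[OF bw] \<sigma>_in
    by (simp add: inc_smult_mult_left inc_smult_mult_right inc_smult_smult inc_unit_mult_unit)
  finally show ?thesis .
next
  case False
  then have "\<sigma> z \<noteq> \<sigma> y" using xy zw \<sigma>_eq_iff by simp
  then show ?thesis
    using False xy zw unit_image_all_backward[OF bw] \<sigma>_in
    by (simp add: inc_smult_mult_left inc_smult_mult_right inc_unit_mult_unit inc_linear_zero[OF linear])
qed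

lemma mult_or_antimult:
  "(\<forall>f\<in>\<I>. \<forall>g\<in>\<I>. \<psi> (f \<star> g) = \<psi> f \<star> \<psi> g) \<or> (\<forall>f\<in>\<I>. \<forall>g\<in>\<I>. \<psi> (f \<star> g) = \<psi> g \<star> \<psi> f)"
proof -
  obtain b where b: "\<forall>x\<in>X. \<forall>y\<in>X. le x y \<longrightarrow> x \<noteq> y \<longrightarrow> forward x y = b"
    using forward_constant ..
  show ?thesis
  proof (cases b)
    case True
    have fw: "forward x y" if "x \<in> X" "y \<in> X" "le x y" "x \<noteq> y" for x y
      using b that True by simp
    have "\<psi> (f \<star> g) = \<psi> f \<star> \<psi> g" if "f \<in> \<I>" "g \<in> \<I>" for f g
    proof (rule inc_linear_mult_from_units[OF linear _ that])
      fix p q assume "p \<in> le_pairs" "q \<in> le_pairs"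
      then show "\<psi> (inc_unit (fst p) (snd p) \<star> inc_unit (fst q) (snd q)) =
          \<psi> (inc_unit (fst p) (snd p)) \<star> \<psi> (inc_unit (fst q) (snd q))"
        by (cases p, cases q) (simp add: le_pairs_def units_mult_all_forward[OF fw])
    qed
    then show ?thesis by (intro disjI1 ballI)
  next
    case False
    have bw: "\<not> forward x y" if "x \<in> X" "y \<in> X" "le x y" "x \<noteq> y" for x y
      using b that False by simp
    have "\<psi> (f \<star> g) = \<psi> g \<star> \<psi> f" if "f \<in> \<I>" "g \<in> \<I>" for f g
    proof (rule inc_linear_antimult_from_units[OF linear _ that])
      fix p q assume "p \<in> le_pairs" "q \<in> le_pairs"
      then show "\<psi> (inc_unit (fst p) (snd p) \<star> inc_unit (fst q) (snd q)) =
          \<psi> (inc_unit (fst q) (snd q)) \<star> \<psi> (inc_unit (fst p) (snd p))"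
        by (cases p, cases q) (simp add: le_pairs_def units_antimult_all_backward[OF bw])
    qed
    then show ?thesis by (intro disjI2 ballI)
  qed
qed

end

context idempotent_preserver
begin

theorem automorphism_or_anti_automorphism:
  assumes connected: "connected_poset X le"
  shows "inc_automorphism X le \<psi> \<or> inc_anti_automorphism X le \<psi>"
proof -
  interpret E: complete_idempotents X le "\<lambda>x. \<psi> (inc_unit x x)"
  proof
    fix x y assume x: "x \<in> X"
    show "\<psi> (inc_unit x x) \<in> \<I>" using x le_refl_on by (simp add: image_in)
    show "\<psi> (inc_unit x x) \<star> \<psi> (inc_unit x x) = \<psi> (inc_unit x x)"
      using x le_refl_on by (simp add: idempotent inc_unit_idempotent)
    show "\<psi> (inc_unit x x) \<noteq> 0"
      using image_eq_zero[OF inc_unit_in[OF x x le_refl_on[OF x]]] inc_unit_neq_zero[of x x] by blast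
    assume "y \<in> X" "x \<noteq> y"
    then show "\<psi> (inc_unit x x) \<star> \<psi> (inc_unit y y) = 0"
      using x le_refl_on by (intro image_orthogonal) (simp_all add: inc_unit_mult_unit)
  next
    show "(\<Sum>x\<in>X. \<psi> (inc_unit x x)) = \<one>"
      using inc_linear_sum[OF linear finite_X, of "\<lambda>x. inc_unit x x"] le_refl_on
      by (simp add: inc_one_eq_sum_units[symmetric] unital)
  qed
  let ?\<theta> = "\<lambda>a. E.conj_left \<star> (\<psi> a \<star> E.conj_right)"
  have "idempotent_preserver X le ?\<theta>"
    by (rule conjugate[OF E.conj_left_in E.conj_right_in E.conj_left_right E.conj_right_left])
  then interpret \<theta>: diagonal_idempotent_preserver X le ?\<theta> E.diag_pos
    using E.bij_diag_pos E.conjugate_E connected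
    by (simp add: diagonal_idempotent_preserver_def diagonal_idempotent_preserver_axioms_def)
  have untwist: "\<psi> (f \<star> g) = p"
    if "p \<in> \<I>" "?\<theta> (f \<star> g) = E.conj_left \<star> (p \<star> E.conj_right)" for f g p
    using conjugation_inj[OF E.conj_left_in E.conj_right_in E.conj_left_right E.conj_right_left
        image_in[OF inc_mult_in] that] .
  have mult: "?\<theta> f \<star> ?\<theta> g = E.conj_left \<star> ((\<psi> f \<star> \<psi> g) \<star> E.conj_right)" if "g \<in> \<I>" for f g
    by (rule conjugation_mult[OF E.conj_right_left image_in[OF that]])
  from \<theta>.mult_or_antimult
  have "(\<forall>f\<in>\<I>. \<forall>g\<in>\<I>. \<psi> (f \<star> g) = \<psi> f \<star> \<psi> g) \<or> (\<forall>f\<in>\<I>. \<forall>g\<in>\<I>. \<psi> (f \<star> g) = \<psi> g \<star> \<psi> f)"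
  proof (elim disjE)
    assume hom: "\<forall>f\<in>\<I>. \<forall>g\<in>\<I>. ?\<theta> (f \<star> g) = ?\<theta> f \<star> ?\<theta> g"
    have "\<psi> (f \<star> g) = \<psi> f \<star> \<psi> g" if "f \<in> \<I>" "g \<in> \<I>" for f g
      using hom that by (intro untwist[OF inc_mult_in]) (simp add: mult)
    then show ?thesis by (intro disjI1 ballI)
  next
    assume anti: "\<forall>f\<in>\<I>. \<forall>g\<in>\<I>. ?\<theta> (f \<star> g) = ?\<theta> g \<star> ?\<theta> f"
    have "\<psi> (f \<star> g) = \<psi> g \<star> \<psi> f" if "f \<in> \<I>" "g \<in> \<I>" for f g
      using anti that by (intro untwist[OF inc_mult_in]) (simp add: mult)
    then show ?thesis by (intro disjI2 ballI)
  qed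
  then show ?thesis
    using bij linear unital by (auto simp: inc_automorphism_def inc_anti_automorphism_def)
qed

end

section \<open>Linear bijections preserving \<open>k\<close>-potents\<close>

lemma primitive_root_nonzero:
  "primitive_root_of_unity m (w::'f::field) \<Longrightarrow> m \<ge> 1 \<Longrightarrow> w \<noteq> 0"
  by (auto simp: primitive_root_of_unity_def power_0_left)

lemma primitive_root_power_inj:
  assumes w: "primitive_root_of_unity m (w::'f::field)" and "i < m" "j < m" "w ^ i = w ^ j"
  shows "i = j"
proof (rule ccontr)
  have w0: "w \<noteq> 0" using primitive_root_nonzero[OF w] assms(2) by simp
  have False if ij: "i < j" "j < m" "w ^ i = w ^ j" for i j
  proof -
    have "w ^ i * w ^ (j - i) = w ^ j" using ij by (metis less_imp_le le_add_diff_inverse power_add)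
    then have "w ^ i * w ^ (j - i) = w ^ i * 1" using ij by simp
    then have "w ^ (j - i) = 1" using w0 by simp
    then show False using w ij by (auto simp: primitive_root_of_unity_def)
  qed
  moreover assume "i \<noteq> j"
  ultimately show False using assms(2-4) by (metis linorder_neqE_nat)
qed

text \<open>In characteristic 2 every square root of unity equals 1, so a primitive root of even
  order cannot exist; and the order is even when \<open>m + 1\<close> is odd.\<close>

lemma two_neq_zero_of_primitive_root:
  assumes w: "primitive_root_of_unity m (w::'f::field)" and "m \<ge> 2" and "of_nat (Suc m) \<noteq> (0::'f)"
  shows "(2::'f) \<noteq> 0"
proof
  assume two: "(2::'f) = 0"
  have "odd (Suc m)"
  proof
    assume "even (Suc m)"
    then obtain q where "Suc m = 2 * q" by (rule evenE)
    then show False using assms(3) two by simp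
  qed
  then obtain q where q: "m = 2 * q" by (auto elim: evenE)
  then have "w ^ q \<noteq> 1" using w assms(2) by (auto simp: primitive_root_of_unity_def)
  moreover have "(w ^ q) ^ 2 = 1" using w q by (simp add: primitive_root_of_unity_def power_mult[symmetric] mult.commute)
  ultimately have "(w ^ q - 1) ^ 2 \<noteq> 0" by simp
  moreover have "(w ^ q - 1) ^ 2 = (w ^ q) ^ 2 + 1 - 2 * w ^ q" by (simp add: power2_diff)
  ultimately show False using \<open>(w ^ q) ^ 2 = 1\<close> two by simp
qed

text \<open>The polynomial \<open>\<Sum> c d X^d\<close> of degree at most \<open>m\<close> vanishes at \<open>0\<close> and at the \<open>m\<close> distinct
  powers of \<open>w\<close>, hence is zero.\<close>

lemma vandermonde_first_coeff:
  fixes c :: "nat \<Rightarrow> 'f::field"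
  assumes w: "primitive_root_of_unity m w" and m: "m \<ge> 1"
    and vanish: "\<And>j. j < m \<Longrightarrow> (\<Sum>d\<in>{1..m}. (w ^ j) ^ d * c d) = 0"
  shows "c 1 = 0"
proof -
  define p where "p = (\<Sum>d\<in>{1..m}. monom (c d) d)"
  have poly_p: "poly p t = (\<Sum>d\<in>{1..m}. t ^ d * c d)" for t
    by (simp add: p_def poly_sum poly_monom mult.commute)
  have degree_p: "degree p \<le> m"
    unfolding p_def by (rule degree_sum_le) (auto intro: order.trans[OF degree_monom_le])
  define R where "R = insert 0 ((\<lambda>j. w ^ j) ` {..<m})"
  have "inj_on (\<lambda>j. w ^ j) {..<m}"
    using primitive_root_power_inj[OF w] by (auto simp: inj_on_def)
  moreover have "0 \<notin> (\<lambda>j. w ^ j) ` {..<m}" using primitive_root_nonzero[OF w m] by auto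
  ultimately have card_R: "card R = Suc m" by (simp add: R_def card_image)
  have "p = 0"
  proof (rule poly_eqI_degree[where A = R])
    fix x assume "x \<in> R"
    then consider "x = 0" | j where "j < m" "x = w ^ j" by (auto simp: R_def)
    then show "poly p x = poly 0 x"
    proof cases
      case 1
      then show ?thesis by (auto simp: poly_p intro: sum.neutral)
    next
      case 2
      then show ?thesis using vanish by (simp add: poly_p)
    qed
  qed (use card_R degree_p in auto)
  then have "coeff p 1 = 0" by simp
  moreover have "coeff p 1 = c 1" using m by (simp add: p_def coeff_sum coeff_monom)
  ultimately show ?thesis by simp
qed

context finite_poset
begin

text \<open>\<open>pencil_coeff a b n d\<close> is the coefficient of \<open>t^d\<close> in \<open>(a + t b)^n\<close>: the sum of all words
  in \<open>a\<close> and \<open>b\<close> of length \<open>n\<close> containing \<open>d\<close> letters \<open>b\<close>.\<close>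

primrec pencil_coeff :: "('a \<Rightarrow> 'a \<Rightarrow> 'f::field) \<Rightarrow> ('a \<Rightarrow> 'a \<Rightarrow> 'f) \<Rightarrow> nat \<Rightarrow> nat \<Rightarrow> ('a \<Rightarrow> 'a \<Rightarrow> 'f)"
  where
    "pencil_coeff a b 0 d = (if d = 0 then \<one> else 0)"
  | "pencil_coeff a b (Suc n) d = a \<star> pencil_coeff a b n d + (if d = 0 then 0 else b \<star> pencil_coeff a b n (d - 1))"

lemma pencil_coeff_above: "n < d \<Longrightarrow> pencil_coeff a b n d = 0"
  by (induct n arbitrary: d) auto

lemma pencil_coeff_0: "pencil_coeff a b n 0 = ipow a n"
  by (induct n) auto

lemma pencil_coeff_top: "pencil_coeff a b n n = ipow b n"
  by (induct n) (auto simp: pencil_coeff_above)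

lemma ipow_pencil: "ipow (a + inc_smult t b) n = (\<Sum>d\<le>n. inc_smult (t ^ d) (pencil_coeff a b n d))"
proof (induct n)
  case 0
  then show ?case by simp
next
  case (Suc n)
  let ?C = "pencil_coeff a b n"
  have "ipow (a + inc_smult t b) (Suc n) = (a + inc_smult t b) \<star> (\<Sum>d\<le>n. inc_smult (t ^ d) (?C d))"
    using Suc by (simp only: inc_pow.simps)
  also have "\<dots> = (\<Sum>d\<le>n. inc_smult (t ^ d) (a \<star> ?C d)) + (\<Sum>d\<le>n. inc_smult (t ^ Suc d) (b \<star> ?C d))"
    by (simp add: inc_distrib_right inc_mult_sum inc_smult_mult_left inc_smult_mult_right inc_smult_smult
        inc_smult_add inc_smult_sum sum.distrib mult.commute)
  also have "(\<Sum>d\<le>n. inc_smult (t ^ d) (a \<star> ?C d)) = (\<Sum>d\<le>Suc n. inc_smult (t ^ d) (a \<star> ?C d))"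
    by (simp add: pencil_coeff_above)
  also have "(\<Sum>d\<le>n. inc_smult (t ^ Suc d) (b \<star> ?C d))
     = (\<Sum>d\<le>Suc n. inc_smult (t ^ d) (if d = 0 then 0 else b \<star> ?C (d - 1)))"
    by (simp add: sum.atMost_Suc_shift del: sum.atMost_Suc)
  also have "(\<Sum>d\<le>Suc n. inc_smult (t ^ d) (a \<star> ?C d)) + \<dots>
      = (\<Sum>d\<le>Suc n. inc_smult (t ^ d) (pencil_coeff a b (Suc n) d))"
    by (simp add: sum.distrib[symmetric] inc_smult_add del: sum.atMost_Suc)
  finally show ?case .
qed

lemma pencil_coeff_1_Suc: "pencil_coeff a b (Suc n) 1 = a \<star> pencil_coeff a b n 1 + b \<star> ipow a n"
  by (simp add: pencil_coeff_0)

lemma pencil_coeff_1_commutator: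
  assumes "a \<in> \<I>" "b \<in> \<I>"
  shows "a \<star> pencil_coeff a b n 1 - pencil_coeff a b n 1 \<star> a = ipow a n \<star> b - b \<star> ipow a n"
proof (induct n)
  case 0
  have "pencil_coeff a b 0 1 = 0" by simp
  then show ?case using assms by (simp only: inc_mult_zero diff_self inc_pow.simps inc_one_mult inc_mult_one)
next
  case (Suc n)
  have comm: "ipow a n \<star> a = a \<star> ipow a n" using ipow_Suc_right[OF assms(1), of n] by simp
  have "a \<star> pencil_coeff a b (Suc n) 1 - pencil_coeff a b (Suc n) 1 \<star> a
      = a \<star> (a \<star> pencil_coeff a b n 1 - pencil_coeff a b n 1 \<star> a) + a \<star> (b \<star> ipow a n) - (b \<star> ipow a n) \<star> a"
    by (simp only: pencil_coeff_1_Suc inc_distrib_left inc_distrib_right inc_right_diff_distrib inc_mult_assoc)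
      (simp add: algebra_simps)
  also have "\<dots> = ipow a (Suc n) \<star> b - b \<star> ipow a (Suc n)"
    by (simp only: Suc inc_right_diff_distrib inc_mult_assoc comm inc_pow.simps) (simp add: algebra_simps)
  finally show ?case .
qed

lemma pencil_coeff_1_commuting:
  assumes "a \<in> \<I>" "b \<in> \<I>" "a \<star> b = b \<star> a"
  shows "pencil_coeff a b (Suc n) 1 = inc_smult (of_nat (Suc n)) (ipow a n \<star> b)"
proof (induct n)
  case 0
  then show ?case using assms by (simp add: inc_one_mult inc_mult_one)
next
  case (Suc n)
  have "pencil_coeff a b (Suc (Suc n)) 1 = a \<star> inc_smult (of_nat (Suc n)) (ipow a n \<star> b) + b \<star> ipow a (Suc n)"
    using Suc by (simp only: pencil_coeff_1_Suc)
  also have "\<dots> = inc_smult (of_nat (Suc n)) (ipow a (Suc n) \<star> b) + ipow a (Suc n) \<star> b"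
    using commute_ipow[OF assms, of "Suc n"] by (simp add: inc_smult_mult_right inc_mult_assoc)
  also have "\<dots> = inc_smult (of_nat (Suc (Suc n))) (ipow a (Suc n) \<star> b)"
    by (simp add: fun_eq_iff algebra_simps inc_smult_apply)
  finally show ?case .
qed


lemma pencil_first_coeff_vanishes:
  fixes w :: "'f::field"
  assumes w: "primitive_root_of_unity m w" and m: "m \<ge> 1"
    and a: "ipow a (Suc m) = a" and b: "ipow b (Suc m) = b"
    and pencil: "\<And>j. j < m \<Longrightarrow> ipow (a + inc_smult (w ^ j) b) (Suc m) = a + inc_smult (w ^ j) b"
  shows "pencil_coeff a b (Suc m) 1 = 0"
proof (intro ext)
  fix x y
  let ?c = "\<lambda>d. pencil_coeff a b (Suc m) d x y"
  have "?c 1 = 0"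
  proof (rule vandermonde_first_coeff[OF w m])
    fix j assume j: "j < m"
    define t where "t = w ^ j"
    have "t ^ Suc m = t * (w ^ m) ^ j" by (simp add: t_def power_mult[symmetric] mult.commute)
    then have tk: "t ^ Suc m = t" using w by (simp add: primitive_root_of_unity_def)
    have split: "(\<Sum>d\<le>Suc m. f d) = f 0 + (\<Sum>d\<in>{1..m}. f d) + f (Suc m)" for f :: "nat \<Rightarrow> 'f"
      by (simp only: atMost_atLeast0 sum.atLeast0_atMost_Suc sum.atLeast_Suc_atMost[of 0 m] le0
          One_nat_def)
    have "ipow (a + inc_smult t b) (Suc m) x y = (\<Sum>d\<le>Suc m. t ^ d * ?c d)"
      by (simp only: ipow_pencil sum_fun_apply inc_smult_apply)
    also have "\<dots> = a x y + (\<Sum>d\<in>{1..m}. t ^ d * ?c d) + t * b x y"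
      by (simp only: split pencil_coeff_0 pencil_coeff_top a b tk power_0 mult_1_left)
    finally show "(\<Sum>d\<in>{1..m}. (w ^ j) ^ d * ?c d) = 0"
      using pencil[OF j] by (simp add: t_def inc_smult_apply)
  qed
  then show "pencil_coeff a b (Suc m) 1 x y = 0 x y" by simp
qed

text \<open>The commutator of \<open>a\<close> with the vanishing coefficient of \<open>t\<close> in \<open>(a + t b)^(m+1)\<close> is
  \<open>a b - b a\<close>; once \<open>a\<close> and \<open>b\<close> commute, that coefficient is \<open>(m+1) a^m b\<close>.\<close>

lemma k_potent_pencil_orthogonal:
  assumes w: "primitive_root_of_unity m w" and m: "m \<ge> 1" and char: "of_nat (Suc m) \<noteq> (0::'f::field)"
    and a: "a \<in> \<I>" "ipow a (Suc m) = a" and b: "b \<in> \<I>" "ipow b (Suc m) = (b :: 'a \<Rightarrow> 'a \<Rightarrow> 'f)"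
    and pencil: "\<And>j. j < m \<Longrightarrow> ipow (a + inc_smult (w ^ j) b) (Suc m) = a + inc_smult (w ^ j) b"
  shows "a \<star> b = 0" and "b \<star> a = 0"
proof -
  have c1: "pencil_coeff a b (Suc m) 1 = 0"
    by (rule pencil_first_coeff_vanishes[OF w m a(2) b(2) pencil])
  then have comm: "a \<star> b = b \<star> a"
    using pencil_coeff_1_commutator[OF a(1) b(1), of "Suc m"] a(2) by simp
  have "inc_smult (of_nat (Suc m)) (ipow a m \<star> b) = 0"
    using pencil_coeff_1_commuting[OF a(1) b(1) comm, of m] c1 by simp
  then have "ipow a m \<star> b = 0" using char by (auto simp: fun_eq_iff inc_smult_apply)
  then have "a \<star> b = 0"
    using a(2) by (metis inc_mult_assoc inc_mult_zero(2) inc_pow.simps(2))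
  then show "a \<star> b = 0" "b \<star> a = 0" using comm by simp_all
qed

lemma ipow_idempotent_pencil:
  assumes e: "e \<in> \<I>" "e \<star> e = e"
  shows "ipow (e + inc_smult c (\<one> - e)) (Suc n) = e + inc_smult (c ^ Suc n) (\<one> - e)"
proof (induct n)
  case 0
  have "e + inc_smult c (\<one> - e) \<in> \<I>" using e by simp
  then show ?case by (simp only: inc_pow.simps inc_mult_one power_Suc0_right)
next
  case (Suc n)
  have eu: "e \<star> (\<one> - e) = 0" "(\<one> - e) \<star> e = 0" "(\<one> - e) \<star> (\<one> - e) = \<one> - e"
    using e by (simp_all add: inc_right_diff_distrib inc_left_diff_distrib inc_mult_one inc_one_mult)
  have "ipow (e + inc_smult c (\<one> - e)) (Suc (Suc n))
      = (e + inc_smult c (\<one> - e)) \<star> (e + inc_smult (c ^ Suc n) (\<one> - e))"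
    by (simp only: inc_pow.simps(2)[of _ _ _ "Suc n"] Suc)
  also have "\<dots> = e + inc_smult (c ^ Suc (Suc n)) (\<one> - e)"
    using e eu by (simp add: inc_distrib_left inc_distrib_right inc_smult_mult_left
        inc_smult_mult_right inc_smult_smult mult_ac)
  finally show ?case .
qed

end

locale k_potent_preserver = finite_poset +
  fixes m :: nat and w :: "'f::field" and \<phi> :: "('a \<Rightarrow> 'a \<Rightarrow> 'f) \<Rightarrow> ('a \<Rightarrow> 'a \<Rightarrow> 'f)"
  assumes m: "m \<ge> 2"
    and w: "primitive_root_of_unity m w"
    and char: "of_nat (Suc m) \<noteq> (0::'f)"
    and linear: "inc_linear X le \<phi>"
    and bij: "bij_betw \<phi> \<I> \<I>"
    and preserves: "\<phi> ` k_potents (Suc m) X le \<subseteq> k_potents (Suc m) X le"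
begin

lemma image_in: "a \<in> \<I> \<Longrightarrow> \<phi> a \<in> \<I>"
  using bij by (auto simp: bij_betw_def)

lemma image_k_potent: "a \<in> \<I> \<Longrightarrow> ipow a (Suc m) = a \<Longrightarrow> ipow (\<phi> a) (Suc m) = \<phi> a"
  using preserves by (auto simp: k_potents_def)

text \<open>For an idempotent \<open>e\<close>, every \<open>e + t (1 - e)\<close> with \<open>t^(m+1) = t\<close> is an \<open>(m+1)\<close>-potent.\<close>

lemma image_idempotent_complement:
  assumes e: "e \<in> \<I>" "e \<star> e = e"
  shows "\<phi> e \<star> \<phi> (\<one> - e) = 0" "\<phi> (\<one> - e) \<star> \<phi> e = 0"
proof -
  have e': "\<one> - e \<in> \<I>" "(\<one> - e) \<star> (\<one> - e) = \<one> - e"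
    using e by (simp_all add: inc_right_diff_distrib inc_left_diff_distrib inc_one_mult inc_mult_one)
  have pencil: "ipow (\<phi> e + inc_smult (w ^ j) (\<phi> (\<one> - e))) (Suc m) = \<phi> e + inc_smult (w ^ j) (\<phi> (\<one> - e))"
    for j
  proof -
    have "(w ^ j) ^ Suc m = w ^ j * (w ^ m) ^ j" by (simp add: power_mult[symmetric] mult.commute)
    then have "(w ^ j) ^ Suc m = w ^ j" using w by (simp add: primitive_root_of_unity_def)
    then have "ipow (e + inc_smult (w ^ j) (\<one> - e)) (Suc m) = e + inc_smult (w ^ j) (\<one> - e)"
      by (simp only: ipow_idempotent_pencil[OF e])
    then show ?thesis
      using image_k_potent[of "e + inc_smult (w ^ j) (\<one> - e)"] e e'
      by (simp add: inc_linear_add[OF linear] inc_linear_smult[OF linear])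
  qed
  show "\<phi> e \<star> \<phi> (\<one> - e) = 0" "\<phi> (\<one> - e) \<star> \<phi> e = 0"
    using k_potent_pencil_orthogonal[OF w _ char image_in[OF e(1)] _ image_in[OF e'(1)] _ pencil] m
      image_k_potent[OF e(1) idempotent_ipow[OF e]] image_k_potent[OF e'(1) idempotent_ipow[OF e']]
    by simp_all
qed

lemma image_one_commutes_image_idempotent:
  assumes "e \<in> \<I>" "e \<star> e = e"
  shows "\<phi> e \<star> \<phi> \<one> = \<phi> \<one> \<star> \<phi> e"
  using image_idempotent_complement[OF assms] assms
  by (simp add: inc_linear_diff[OF linear] inc_right_diff_distrib inc_left_diff_distrib)

lemma image_one_central:
  assumes a: "a \<in> \<I>"
  shows "a \<star> \<phi> \<one> = \<phi> \<one> \<star> a"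
proof -
  have units: "\<phi> (inc_unit i j) \<star> \<phi> \<one> = \<phi> \<one> \<star> \<phi> (inc_unit i j)" if "(i, j) \<in> le_pairs" for i j
  proof (cases "i = j")
    case True
    then show ?thesis
      using that inc_unit_idempotent by (intro image_one_commutes_image_idempotent) (auto simp: le_pairs_def)
  next
    case False
    have ij: "i \<in> X" "j \<in> X" "le i j" using that by (auto simp: le_pairs_def)
    have idem: "inc_unit i i \<star> inc_unit i i = inc_unit i i"
      "(inc_unit i i + inc_unit i j) \<star> (inc_unit i i + inc_unit i j) = inc_unit i i + inc_unit i j"
      using ij False le_refl_on by (simp_all add: inc_distrib_left inc_distrib_right inc_unit_mult_unit)
    have "\<phi> (inc_unit i j) = \<phi> (inc_unit i i + inc_unit i j) - \<phi> (inc_unit i i)"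
      using inc_linear_add[OF linear, of "inc_unit i i" "inc_unit i j"] ij le_refl_on by simp
    then show ?thesis
      using image_one_commutes_image_idempotent[OF _ idem(1)] image_one_commutes_image_idempotent[OF _ idem(2)]
        ij le_refl_on by (simp add: inc_right_diff_distrib inc_left_diff_distrib)
  qed
  obtain b where b: "b \<in> \<I>" "a = \<phi> b" using a bij by (auto simp: bij_betw_def)
  show ?thesis
    unfolding b(2) inc_linear_expansion[OF linear b(1)]
    by (simp add: inc_sum_mult inc_mult_sum inc_smult_mult_left inc_smult_mult_right units split_beta)
qed

lemma image_one_scalar:
  assumes "connected_poset X le"
  shows "\<exists>r. r ^ m = 1 \<and> r \<noteq> 0 \<and> \<phi> \<one> = inc_smult r \<one>"
proof (cases "X = {}")
  case True
  then have "\<phi> \<one> = inc_smult 1 \<one>"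
    using image_in[OF inc_one_in] by (auto simp: fun_eq_iff incidence_alg_def inc_one_def)
  then show ?thesis by (intro exI[of _ 1]) simp
next
  case False
  then obtain x0 where x0: "x0 \<in> X" by auto
  obtain r where r: "\<phi> \<one> = inc_smult r \<one>"
    using central_scalar[OF assms image_in[OF inc_one_in] image_one_central] by blast
  have "ipow (\<phi> \<one>) (Suc m) = \<phi> \<one>" using image_k_potent[OF inc_one_in ipow_one] .
  then have "inc_smult (r ^ Suc m) \<one> x0 x0 = inc_smult r \<one> x0 x0" by (simp only: r ipow_smult ipow_one)
  then have rk: "r * r ^ m = r * 1" using x0 by (simp add: inc_smult_apply inc_one_def)
  have "r \<noteq> 0"
  proof
    assume "r = 0"
    then have "\<phi> \<one> = \<phi> 0" using r by (simp add: inc_linear_zero[OF linear])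
    then have "(\<one> :: 'a \<Rightarrow> 'a \<Rightarrow> 'f) = 0" using bij by (auto simp: bij_betw_def inj_on_def)
    then show False using x0 by (metis inc_one_def zero_fun_apply zero_neq_one)
  qed
  then show ?thesis using rk r by auto
qed

lemma scaled_idempotent_preserver:
  assumes r: "r \<noteq> 0" "\<phi> \<one> = inc_smult r \<one>"
  shows "idempotent_preserver X le (\<lambda>a. inc_smult (inverse r) (\<phi> a))"
proof
  show "inc_linear X le (\<lambda>a. inc_smult (inverse r) (\<phi> a))"
    using linear by (simp add: inc_linear_def inc_add_eq_plus inc_smult_add inc_smult_smult mult.commute)
  show "inc_smult (inverse r) (\<phi> \<one>) = \<one>" using r by (simp add: inc_smult_smult)
  show "(2::'f) \<noteq> 0" using two_neq_zero_of_primitive_root[OF w m char] .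
  show "inc_smult (inverse r) (\<phi> e) \<star> inc_smult (inverse r) (\<phi> e) = inc_smult (inverse r) (\<phi> e)"
    if "e \<in> \<I>" "e \<star> e = e" for e
  proof -
    have "\<phi> e \<star> \<phi> e = \<phi> e \<star> \<phi> \<one>"
      using image_idempotent_complement[OF that] that
      by (simp add: inc_linear_diff[OF linear] inc_right_diff_distrib)
    then have "\<phi> e \<star> \<phi> e = inc_smult r (\<phi> e)"
      using r image_in[OF that(1)] by (simp add: inc_smult_mult_right inc_mult_one)
    then show ?thesis using r by (simp add: inc_smult_mult_left inc_smult_mult_right inc_smult_smult)
  qed
  have "inj_on (\<lambda>a. inc_smult (inverse r) (\<phi> a)) \<I>"
    using bij r by (auto simp: bij_betw_def inj_on_def fun_eq_iff inc_smult_apply)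
  moreover have "(\<lambda>a. inc_smult (inverse r) (\<phi> a)) ` \<I> = \<I>"
  proof
    show "(\<lambda>a. inc_smult (inverse r) (\<phi> a)) ` \<I> \<subseteq> \<I>" using image_in by auto
    show "\<I> \<subseteq> (\<lambda>a. inc_smult (inverse r) (\<phi> a)) ` \<I>"
    proof
      fix a :: "'a \<Rightarrow> 'a \<Rightarrow> 'f" assume "a \<in> \<I>"
      then obtain b where "b \<in> \<I>" "\<phi> b = inc_smult r a"
        using bij by (metis bij_betw_def imageE inc_smult_in)
      then show "a \<in> (\<lambda>a. inc_smult (inverse r) (\<phi> a)) ` \<I>"
        using r by (auto simp: inc_smult_smult intro!: image_eqI)
    qed
  qed
  ultimately show "bij_betw (\<lambda>a. inc_smult (inverse r) (\<phi> a)) \<I> \<I>"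
    by (simp add: bij_betw_def)
qed

end

theorem theorem7p6:
  fixes X :: "'a set" and le :: "'a \<Rightarrow> 'a \<Rightarrow> bool" and k :: nat
    and \<phi> :: "('a \<Rightarrow> 'a \<Rightarrow> 'f::field) \<Rightarrow> ('a \<Rightarrow> 'a \<Rightarrow> 'f)"
  assumes "k \<ge> 3"
    and "finite X" and "poset_on X le" and "connected_poset X le"
    and "\<exists>w::'f. primitive_root_of_unity (k - 1) w"
    and "of_nat k \<noteq> (0::'f)"
    and "inc_linear X le \<phi>"
    and "bij_betw \<phi> (incidence_alg X le) (incidence_alg X le)"
    and "\<phi> ` k_potents k X le \<subseteq> k_potents k X le"
  shows "\<exists>r::'f. r ^ (k - 1) = 1 \<and>
           (\<exists>\<psi>. (inc_automorphism X le \<psi> \<or> inc_anti_automorphism X le \<psi>) \<and>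
                 (\<forall>f\<in>incidence_alg X le. \<phi> f = inc_smult r (\<psi> f)))"
proof -
  obtain w :: 'f where w: "primitive_root_of_unity (k - 1) w" using assms(5) by blast
  have k: "Suc (k - 1) = k" using assms(1) by simp
  interpret k_potent_preserver X le "k - 1" w \<phi>
    by unfold_locales (use assms w in \<open>simp_all only: k\<close>, use assms(1) in simp)
  obtain r where r: "r ^ (k - 1) = 1" "r \<noteq> 0" "\<phi> (inc_one X) = inc_smult r (inc_one X)"
    using image_one_scalar[OF assms(4)] by blast
  define \<psi> where "\<psi> a = inc_smult (inverse r) (\<phi> a)" for a
  interpret idempotent_preserver X le \<psi>
    unfolding \<psi>_def by (rule scaled_idempotent_preserver[OF r(2,3)])
  have "\<phi> f = inc_smult r (\<psi> f)" for f
    using r(2) by (simp add: \<psi>_def inc_smult_smult)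
  then show ?thesis
    using r(1) automorphism_or_anti_automorphism[OF assms(4)] by blast
qed

end
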